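(* Let $\rho>0$, $Z\in A_\rho(\mathbb{C}^\ell,\mathbb{C}^d)$ with $\ell=d(N+1)$ and $Z(0)=0$, let $\boldsymbol\lambda=(\lambda_1,\ldots,\lambda_m)$ be a stable non-resonant vector of eigenvalues, $\Lambda=\mathrm{diag}(\lambda_1,\ldots,\lambda_m)$, and assume $B_0$ is non-singular. Then: (1) $D\Phi(0)$ maps $H$ into $H$ and $D\Phi(0):H\to H$ is invertible with bounded inverse; (2) if $\varphi\in H$, $\varphi(z)=\sum_{k\ge2}\sum_{|\alpha|=k}z^\alpha\varphi_\alpha$, and $\eta=D\Phi(0)^{-1}\varphi=\sum_{k\ge2}\sum_{|\alpha|=k}z^\alpha\eta_\alpha$, then $\eta_\alpha=T(\boldsymbol\lambda^\alpha)^{-1}\varphi_\alpha$ for every multi-index $\alpha$ with $|\alpha|\ge2$.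
   Context: Sup norm $\|\cdot\|_\infty$; $A_\rho(\mathbb{C}^r,\mathbb{C}^s)$ is the Banach space of $f:\{\|z\|_\infty\le\rho\}\to\mathbb{C}^s$, $f(z)=\sum_\alpha z^\alpha\eta_\alpha$, $\|f\|_\rho=\sum_k(\sum_{|\alpha|=k}\|\eta_\alpha\|_\infty)\rho^k<\infty$. $X=A_1(\mathbb{C}^m,\mathbb{C}^d)$, $\mathcal{U}=\{f\in X:\|f\|_1<\rho\}$, $[\Phi(P)](z)=Z(P(z),P(\Lambda z),\ldots,P(\Lambda^Nz))$. $H=\{P\in X: P(0)=0,\ P'(0)=0\}$, i.e. functions $\sum_{k\ge2}\sum_{|\alpha|=k}z^\alpha P_\alpha$, with the norm $\|\cdot\|_1$. $B_i=\partial_iZ(0)$ (derivative w.r.t. the $i$-th block variable), $T(\lambda)=\sum_{i=0}^N\lambda^iB_i$, $\mathcal{F}(\lambda)=\det T(\lambda)$. $\boldsymbol\lambda^\alpha=\prod\lambda_i^{\alpha_i}$. A vector $\boldsymbol\lambda=(\lambda_1,\ldots,\lambda_m)\in\mathbb{C}^m$ is a stable non-resonant vector of eigenvalues if $|\lambda_i|<1$ for all $i$, $\mathcal{F}(\lambda_i)=0$ for all $i$, and $\mathcal{F}(\boldsymbol\lambda^\alpha)\ne0$ for all $\alpha\in\mathbb{Z}_+^m$ with $|\alpha|\ge2$. *)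

theory Defs
  imports "HOL-Analysis.Analysis"
begin

text \<open>Variables are indexed by a finite
  index set I (points are functions I -> complex, coordinates outside I are ignored);
  values lie in complex^'s.\<close>

definition mindex :: "'i set \<Rightarrow> ('i \<Rightarrow> nat) set" where
  "mindex I = {\<alpha>. \<forall>i. i \<notin> I \<longrightarrow> \<alpha> i = 0}"

definition mdeg :: "'i set \<Rightarrow> ('i \<Rightarrow> nat) \<Rightarrow> nat" where
  "mdeg I \<alpha> = (\<Sum>i\<in>I. \<alpha> i)"

definition mon :: "'i set \<Rightarrow> ('i \<Rightarrow> complex) \<Rightarrow> ('i \<Rightarrow> nat) \<Rightarrow> complex" where
  "mon I z \<alpha> = (\<Prod>i\<in>I. z i ^ \<alpha> i)"

definition supv :: "complex ^ 's::finite \<Rightarrow> real" where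
  "supv v = Max (range (\<lambda>j. cmod (v $ j)))"

definition polydisc :: "real \<Rightarrow> 'i set \<Rightarrow> ('i \<Rightarrow> complex) set" where
  "polydisc \<rho> I = {z. \<forall>i\<in>I. cmod (z i) \<le> \<rho>}"

definition is_Arep :: "real \<Rightarrow> 'i set \<Rightarrow> (('i \<Rightarrow> complex) \<Rightarrow> complex ^ 's::finite)
    \<Rightarrow> (('i \<Rightarrow> nat) \<Rightarrow> complex ^ 's) \<Rightarrow> bool" where
  "is_Arep \<rho> I f c \<longleftrightarrow>
     (\<lambda>\<alpha>. supv (c \<alpha>) * \<rho> ^ mdeg I \<alpha>) summable_on mindex I \<and>
     (\<forall>z\<in>polydisc \<rho> I. ((\<lambda>\<alpha>. mon I z \<alpha> *s c \<alpha>) has_sum f z) (mindex I))"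

definition inA :: "real \<Rightarrow> 'i set \<Rightarrow> (('i \<Rightarrow> complex) \<Rightarrow> complex ^ 's::finite) \<Rightarrow> bool" where
  "inA \<rho> I f \<longleftrightarrow> (\<exists>c. is_Arep \<rho> I f c)"

definition coefA :: "real \<Rightarrow> 'i set \<Rightarrow> (('i \<Rightarrow> complex) \<Rightarrow> complex ^ 's::finite)
    \<Rightarrow> ('i \<Rightarrow> nat) \<Rightarrow> complex ^ 's" where
  "coefA \<rho> I f = (SOME c. is_Arep \<rho> I f c)"

definition normA :: "real \<Rightarrow> 'i set \<Rightarrow> (('i \<Rightarrow> complex) \<Rightarrow> complex ^ 's::finite) \<Rightarrow> real" where
  "normA \<rho> I f = infsum (\<lambda>\<alpha>. supv (coefA \<rho> I f \<alpha>) * \<rho> ^ mdeg I \<alpha>) (mindex I)"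

text \<open>The space X = A_1(C^m, C^d), with variables indexed by the finite type 'm.\<close>
abbreviation inX :: "(('m::finite \<Rightarrow> complex) \<Rightarrow> complex ^ 'd::finite) \<Rightarrow> bool" where
  "inX f \<equiv> inA 1 UNIV f"
abbreviation normX :: "(('m::finite \<Rightarrow> complex) \<Rightarrow> complex ^ 'd::finite) \<Rightarrow> real" where
  "normX f \<equiv> normA 1 UNIV f"
abbreviation coefX :: "(('m::finite \<Rightarrow> complex) \<Rightarrow> complex ^ 'd::finite) \<Rightarrow> ('m \<Rightarrow> nat) \<Rightarrow> complex ^ 'd" where
  "coefX f \<equiv> coefA 1 UNIV f"

text \<open>equality as elements of X (i.e. on the closed unit polydisc)\<close>
definition eqX :: "(('m::finite \<Rightarrow> complex) \<Rightarrow> complex ^ 'd::finite) \<Rightarrow> (('m \<Rightarrow> complex) \<Rightarrow> complex ^ 'd) \<Rightarrow> bool" where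
  "eqX f g \<longleftrightarrow> (\<forall>z\<in>polydisc 1 UNIV. f z = g z)"

text \<open>H = {P in X : P(0)=0, P'(0)=0}, i.e. all Taylor coefficients of degree <= 1 vanish\<close>
definition inH :: "(('m::finite \<Rightarrow> complex) \<Rightarrow> complex ^ 'd::finite) \<Rightarrow> bool" where
  "inH P \<longleftrightarrow> inX P \<and> (\<forall>\<alpha>. mdeg UNIV \<alpha> \<le> 1 \<longrightarrow> coefX P \<alpha> = 0)"

text \<open>The map Phi: [Phi(P)](z) = Z(P(z), P(Lambda z), ..., P(Lambda^N z)); the input of Z is
  indexed by (i, j) with block i in {0..N} and component j.\<close>
definition Phi :: "nat \<Rightarrow> ('m::finite \<Rightarrow> complex) \<Rightarrow> ((nat \<times> 'd::finite \<Rightarrow> complex) \<Rightarrow> complex ^ 'd)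
    \<Rightarrow> (('m \<Rightarrow> complex) \<Rightarrow> complex ^ 'd) \<Rightarrow> (('m \<Rightarrow> complex) \<Rightarrow> complex ^ 'd)" where
  "Phi N lam Z P = (\<lambda>z. Z (\<lambda>(i, j). if i \<le> N then P (\<lambda>k. lam k ^ i * z k) $ j else 0))"

definition bounded_linX :: "((('m::finite \<Rightarrow> complex) \<Rightarrow> complex ^ 'd::finite) \<Rightarrow> (('m \<Rightarrow> complex) \<Rightarrow> complex ^ 'd)) \<Rightarrow> bool" where
  "bounded_linX L \<longleftrightarrow>
     (\<forall>f. inX f \<longrightarrow> inX (L f)) \<and>
     (\<forall>f g. inX f \<longrightarrow> inX g \<longrightarrow> eqX (L (\<lambda>z. f z + g z)) (\<lambda>z. L f z + L g z)) \<and>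
     (\<forall>c f. inX f \<longrightarrow> eqX (L (\<lambda>z. c *s f z)) (\<lambda>z. c *s L f z)) \<and>
     (\<exists>C. \<forall>f. inX f \<longrightarrow> normX (L f) \<le> C * normX f)"

definition is_DPhi0 :: "((('m::finite \<Rightarrow> complex) \<Rightarrow> complex ^ 'd::finite) \<Rightarrow> (('m \<Rightarrow> complex) \<Rightarrow> complex ^ 'd))
    \<Rightarrow> ((('m \<Rightarrow> complex) \<Rightarrow> complex ^ 'd) \<Rightarrow> (('m \<Rightarrow> complex) \<Rightarrow> complex ^ 'd)) \<Rightarrow> bool" where
  "is_DPhi0 \<Phi> L \<longleftrightarrow> bounded_linX L \<and>
     (\<forall>\<epsilon>>0. \<exists>\<delta>>0. \<forall>h. inX h \<and> normX h < \<delta> \<longrightarrow>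
        normX (\<lambda>z. \<Phi> h z - \<Phi> (\<lambda>_. 0) z - L h z) \<le> \<epsilon> * normX h)"

definition inverse_on_H :: "((('m::finite \<Rightarrow> complex) \<Rightarrow> complex ^ 'd::finite) \<Rightarrow> (('m \<Rightarrow> complex) \<Rightarrow> complex ^ 'd))
    \<Rightarrow> ((('m \<Rightarrow> complex) \<Rightarrow> complex ^ 'd) \<Rightarrow> (('m \<Rightarrow> complex) \<Rightarrow> complex ^ 'd)) \<Rightarrow> bool" where
  "inverse_on_H L M \<longleftrightarrow>
     (\<forall>\<phi>. inH \<phi> \<longrightarrow> inH (M \<phi>) \<and> eqX (L (M \<phi>)) \<phi>) \<and>
     (\<forall>P. inH P \<longrightarrow> eqX (M (L P)) P)"

text \<open>B_i = partial derivative of Z at 0 w.r.t. the i-th block variable (a d x d matrix):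
  entry (j,k) is the derivative of the j-th component of Z along the (i,k)-th coordinate.\<close>
definition Bmat :: "((nat \<times> 'd::finite \<Rightarrow> complex) \<Rightarrow> complex ^ 'd) \<Rightarrow> nat \<Rightarrow> complex ^ 'd ^ 'd" where
  "Bmat Z i = (\<chi> j k. deriv (\<lambda>t. Z (\<lambda>x. if x = (i, k) then t else 0) $ j) 0)"

definition Tmat :: "nat \<Rightarrow> ((nat \<times> 'd::finite \<Rightarrow> complex) \<Rightarrow> complex ^ 'd) \<Rightarrow> complex \<Rightarrow> complex ^ 'd ^ 'd" where
  "Tmat N Z \<mu> = (\<chi> j k. \<Sum>i\<le>N. \<mu> ^ i * Bmat Z i $ j $ k)"

definition charF :: "nat \<Rightarrow> ((nat \<times> 'd::finite \<Rightarrow> complex) \<Rightarrow> complex ^ 'd) \<Rightarrow> complex \<Rightarrow> complex" where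
  "charF N Z \<mu> = det (Tmat N Z \<mu>)"

definition lampow :: "('m::finite \<Rightarrow> complex) \<Rightarrow> ('m \<Rightarrow> nat) \<Rightarrow> complex" where
  "lampow lam \<alpha> = (\<Prod>i\<in>UNIV. lam i ^ \<alpha> i)"

definition stable_nonresonant :: "nat \<Rightarrow> ((nat \<times> 'd::finite \<Rightarrow> complex) \<Rightarrow> complex ^ 'd)
    \<Rightarrow> ('m::finite \<Rightarrow> complex) \<Rightarrow> bool" where
  "stable_nonresonant N Z lam \<longleftrightarrow>
     (\<forall>i. cmod (lam i) < 1) \<and> (\<forall>i. charF N Z (lam i) = 0) \<and>
     (\<forall>\<alpha>. mdeg UNIV \<alpha> \<ge> 2 \<longrightarrow> charF N Z (lampow lam \<alpha>) \<noteq> 0)"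

end

theory Submission
  imports Defs
begin

text \<open>
  Elements of \<open>X = A\<^sub>1\<close> are handled through their Taylor coefficients:
  coefficients are unique (a discrete Fourier filter over roots of unity), so equality,
  membership and norm in \<open>X\<close> can be read off from any absolutely summable coefficient family
  representing a function on the closed unit polydisc (\<open>is_Xrep\<close>).

  The candidate derivative is \<open>Lphi h = \<Sum>\<^sub>i B\<^sub>i h(\<Lambda>\<^sup>i \<cdot>)\<close>; it multiplies the coefficient of
  \<open>z\<^sup>\<alpha>\<close> by \<open>T(\<lambda>\<^sup>\<alpha>)\<close>.  Splitting \<open>Z\<close> into its linear part (whose coefficients are the
  entries of the \<open>B\<^sub>i\<close>) and a tail of order two, and expanding the tail composed with \<open>h\<close>
  as a power series, shows \<open>\<parallel>\<Phi>(h) - \<Phi>(0) - Lphi h\<parallel> = O(\<parallel>h\<parallel>\<^sup>2)\<close>, so \<open>Lphi\<close> is the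
  derivative \<open>D\<Phi>(0)\<close>.  A general uniqueness argument for derivatives on \<open>X\<close> shows that every
  derivative acts by \<open>T(\<lambda>\<^sup>\<alpha>)\<close> on coefficients; in particular it preserves \<open>H\<close>.

  Non-resonance makes every \<open>T(\<lambda>\<^sup>\<alpha>)\<close>, \<open>|\<alpha>| \<ge> 2\<close>, invertible; stability and the invertibility
  of \<open>B\<^sub>0 = T(0)\<close> bound the inverses uniformly, since \<open>\<lambda>\<^sup>\<alpha> \<rightarrow> 0\<close>.  The diagonal operator
  \<open>\<eta>\<^sub>\<alpha> = T(\<lambda>\<^sup>\<alpha>)\<^sup>-\<^sup>1 \<phi>\<^sub>\<alpha>\<close> is then a bounded inverse on \<open>H\<close>, and every inverse has this form.
\<close>

lemma cmod_nth_le_supv: "cmod (v $ j) \<le> supv v"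
  unfolding supv_def by (rule Max_ge) auto

lemma supv_nonneg: "0 \<le> supv v"
  using cmod_nth_le_supv[of v] norm_ge_zero order_trans by blast

lemma supv_le_norm: "supv (v::complex^'s::finite) \<le> norm v"
  unfolding supv_def by (subst Max_le_iff) (auto intro: Finite_Cartesian_Product.norm_nth_le)

lemma norm_le_sum_nth: "norm (v::complex^'s::finite) \<le> (\<Sum>j\<in>UNIV. cmod (v $ j))"
  by (simp add: norm_vec_def L2_set_le_sum)

lemma norm_le_supv: "norm (v::complex^'s::finite) \<le> real CARD('s) * supv v"
proof -
  have "norm v \<le> (\<Sum>j\<in>UNIV. cmod (v $ j))" by (rule norm_le_sum_nth)
  also have "\<dots> \<le> (\<Sum>j\<in>(UNIV::'s set). supv v)" by (rule sum_mono) (rule cmod_nth_le_supv)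
  also have "\<dots> = real CARD('s) * supv v" by simp
  finally show ?thesis .
qed

lemma supv_summable_iff:
  "(\<lambda>\<alpha>. supv (c \<alpha> :: complex^'d::finite)) summable_on A \<longleftrightarrow> (\<lambda>\<alpha>. norm (c \<alpha>)) summable_on A"
proof
  assume "(\<lambda>\<alpha>. supv (c \<alpha>)) summable_on A"
  then have "(\<lambda>\<alpha>. real CARD('d) * supv (c \<alpha>)) summable_on A" by (rule summable_on_cmult_right)
  then show "(\<lambda>\<alpha>. norm (c \<alpha>)) summable_on A"
    by (rule summable_on_comparison_test) (auto simp: norm_le_supv)
next
  assume "(\<lambda>\<alpha>. norm (c \<alpha>)) summable_on A"
  then show "(\<lambda>\<alpha>. supv (c \<alpha>)) summable_on A"
    by (rule summable_on_comparison_test) (auto simp: supv_le_norm supv_nonneg)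
qed

lemma norm_vsmult: "norm (k *s (v::complex^'s::finite)) = cmod k * norm v"
  unfolding norm_vec_def by (simp add: L2_set_right_distrib norm_mult)

lemma supv_vsmult: "supv (k *s (v::complex^'s::finite)) = cmod k * supv v"
proof -
  have "range (\<lambda>j. cmod ((k *s v) $ j)) = (\<lambda>x. cmod k * x) ` range (\<lambda>j. cmod (v $ j))"
    by (auto simp: norm_mult)
  then show ?thesis unfolding supv_def
    by (simp add: mono_Max_commute[symmetric] mono_def mult_left_mono)
qed

lemma supv_add: "supv (v + w :: complex^'s::finite) \<le> supv v + supv w"
  unfolding supv_def by (subst Max_le_iff) (auto intro!: add_mono norm_triangle_le Max_ge)

lemma supv_eq_0: "supv (v::complex^'s::finite) = 0 \<longleftrightarrow> v = 0"
proof
  assume "supv v = 0"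
  then have "cmod (v $ j) = 0" for j
    using cmod_nth_le_supv[of v j] norm_ge_zero[of "v $ j"] by linarith
  then show "v = 0" by (simp add: vec_eq_iff)
qed (simp add: supv_def)

lemma vsmult_sum: "c *s sum f A = sum (\<lambda>x. c *s (f x :: complex^'s::finite)) A"
  by (simp add: vec_eq_iff sum_distrib_left)

definition entry_norm :: "complex^'n::finite^'m::finite \<Rightarrow> real" where
  "entry_norm A = (\<Sum>j\<in>UNIV. \<Sum>k\<in>UNIV. cmod (A $ j $ k))"

lemma entry_norm_nonneg: "0 \<le> entry_norm A"
  unfolding entry_norm_def by (intro sum_nonneg) auto

lemma norm_mv_le: "norm (A *v v) \<le> entry_norm A * norm v"
proof -
  have "norm (A *v v) \<le> (\<Sum>j\<in>UNIV. cmod ((A *v v) $ j))" by (rule norm_le_sum_nth)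
  also have "\<dots> \<le> (\<Sum>j\<in>UNIV. \<Sum>k\<in>UNIV. cmod (A $ j $ k) * norm v)"
  proof (rule sum_mono)
    fix j
    have "cmod ((A *v v) $ j) = cmod (\<Sum>k\<in>UNIV. A $ j $ k * v $ k)"
      by (simp add: matrix_vector_mult_def)
    also have "\<dots> \<le> (\<Sum>k\<in>UNIV. cmod (A $ j $ k * v $ k))" by (rule norm_sum)
    also have "\<dots> \<le> (\<Sum>k\<in>UNIV. cmod (A $ j $ k) * norm v)"
      by (rule sum_mono)
        (auto simp: norm_mult intro: mult_left_mono Finite_Cartesian_Product.norm_nth_le)
    finally show "cmod ((A *v v) $ j) \<le> (\<Sum>k\<in>UNIV. cmod (A $ j $ k) * norm v)" .
  qed
  also have "\<dots> = entry_norm A * norm v" by (simp add: entry_norm_def sum_distrib_right)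
  finally show ?thesis .
qed

lemma bounded_linear_vsmult: "bounded_linear (\<lambda>v::complex^'s::finite. k *s v)"
  by (rule bounded_linear_intro[where K="cmod k"])
    (auto simp: norm_vsmult vector_ssub_ldistrib algebra_simps vec_eq_iff)

lemma bounded_linear_smultv: "bounded_linear (\<lambda>k::complex. k *s (v::complex^'s::finite))"
proof (rule bounded_linear_intro[where K="norm v"])
  show "(x + y) *s v = x *s v + y *s v" for x y by (rule vector_sadd_rdistrib)
  show "(r *\<^sub>R x) *s v = r *\<^sub>R (x *s v)" for r x
    by (simp only: vec_eq_iff vector_scaleR_component vector_scalar_mult_def vec_lambda_beta)
      (simp add: scaleR_conv_of_real)
  show "norm (x *s v) \<le> norm x * norm v" for x by (simp add: norm_vsmult)
qed

lemma bounded_linear_mv: "bounded_linear (\<lambda>v::complex^'n::finite. (A::complex^'n^'m::finite) *v v)"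
proof (rule bounded_linear_intro[where K="entry_norm A"])
  show "A *v (x + y) = A *v x + A *v y" for x y by (simp add: matrix_vector_right_distrib)
  show "A *v (r *\<^sub>R x) = r *\<^sub>R (A *v x)" for r x
    by (simp add: vec_eq_iff matrix_vector_mult_def scaleR_sum_right)
  show "norm (A *v x) \<le> norm x * entry_norm A" for x
    using norm_mv_le[of A x] by (simp add: mult.commute)
qed

lemma matrix_inv_cancel:
  fixes A :: "complex^'n::finite^'n"
  assumes "det A \<noteq> 0"
  shows matrix_inv_right: "A *v (matrix_inv A *v v) = v"
    and matrix_inv_left: "matrix_inv A *v (A *v v) = v"
proof -
  have "invertible A" using assms by (simp add: invertible_det_nz)
  then have "A ** matrix_inv A = mat 1 \<and> matrix_inv A ** A = mat 1"
    unfolding invertible_def matrix_inv_def by (rule someI_ex)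
  then show "A *v (matrix_inv A *v v) = v" "matrix_inv A *v (A *v v) = v"
    by (simp_all add: matrix_vector_mul_assoc)
qed

lemma has_sum_diff:
  fixes f g :: "'a \<Rightarrow> 'b::topological_ab_group_add"
  assumes "(f has_sum a) A" "(g has_sum b) A"
  shows "((\<lambda>x. f x - g x) has_sum (a - b)) A"
proof -
  have "((\<lambda>x. - g x) has_sum (- b)) A" using assms(2) by (simp add: has_sum_uminus)
  from has_sum_add[OF assms(1) this] show ?thesis by simp
qed

lemma has_sum_finite_sum:
  fixes f :: "'a \<Rightarrow> 'b \<Rightarrow> 'c::topological_comm_monoid_add"
  assumes "finite S" "\<And>j. j \<in> S \<Longrightarrow> (f j has_sum s j) A"
  shows "((\<lambda>x. \<Sum>j\<in>S. f j x) has_sum (\<Sum>j\<in>S. s j)) A"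
  using assms by (induction S rule: finite_induct) (simp_all add: has_sum_add)

lemma has_sum_vsmult:
  "(f has_sum s) A \<Longrightarrow> ((\<lambda>x. k *s (f x :: complex^'s::finite)) has_sum (k *s s)) A"
  by (rule has_sum_bounded_linear[OF bounded_linear_vsmult])

lemma has_sum_nth:
  "(f has_sum s) A \<Longrightarrow> ((\<lambda>x. (f x :: complex^'s::finite) $ j) has_sum (s $ j)) A"
  by (rule has_sum_bounded_linear[OF bounded_linear_vec_nth])

lemma mindex_UNIV [simp]: "mindex (UNIV::'i set) = UNIV"
  by (auto simp: mindex_def)

lemma mon_bound_r:
  assumes "0 \<le> r" "\<forall>i\<in>I. cmod (w i) \<le> r"
  shows "cmod (mon I w \<beta>) \<le> r ^ mdeg I \<beta>"
proof -
  have "cmod (mon I w \<beta>) = (\<Prod>i\<in>I. cmod (w i) ^ \<beta> i)"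
    unfolding mon_def prod_norm[symmetric] by (simp add: norm_power)
  also have "\<dots> \<le> (\<Prod>i\<in>I. r ^ \<beta> i)"
    by (rule prod_mono) (use assms in \<open>auto intro: power_mono\<close>)
  also have "\<dots> = r ^ mdeg I \<beta>" unfolding mdeg_def by (simp add: power_sum)
  finally show ?thesis .
qed

lemma mon_bound: "\<forall>i\<in>I. cmod (z i) \<le> 1 \<Longrightarrow> cmod (mon I z \<alpha>) \<le> 1"
  using mon_bound_r[of 1 I z \<alpha>] by simp

lemma pow_le_quadratic_factor:
  fixes r \<rho> :: real
  assumes "0 \<le> r" "r \<le> \<rho>" "2 \<le> m"
  shows "r ^ m \<le> (r/\<rho>)^2 * \<rho>^m"
proof -
  have "r ^ m = r^2 * r^(m-2)" using assms by (metis le_add_diff_inverse power_add)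
  also have "\<dots> \<le> r^2 * \<rho>^(m-2)" using assms by (intro mult_left_mono power_mono) auto
  also have "\<dots> = (r/\<rho>)^2 * \<rho>^m"
  proof -
    have "\<rho>^m = \<rho>^2 * \<rho>^(m-2)" using assms by (metis le_add_diff_inverse power_add)
    then show ?thesis using assms by (cases "\<rho> = 0") (simp_all add: power_divide field_simps)
  qed
  finally show ?thesis .
qed

definition unit_idx :: "'i \<Rightarrow> 'i \<Rightarrow> nat" where
  "unit_idx x = (\<lambda>y. if y = x then 1 else 0)"

definition deg_ge2 :: "'i set \<Rightarrow> ('i \<Rightarrow> nat) set" where
  "deg_ge2 I = {\<beta>\<in>mindex I. 2 \<le> mdeg I \<beta>}"

lemma mon_unit_idx: "finite I \<Longrightarrow> x \<in> I \<Longrightarrow> mon I w (unit_idx x) = w x"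
proof -
  assume "finite I" "x \<in> I"
  have "mon I w (unit_idx x) = (\<Prod>i\<in>I. if i = x then w i else 1)"
    unfolding mon_def unit_idx_def by (rule prod.cong) auto
  also have "\<dots> = w x" using \<open>finite I\<close> \<open>x \<in> I\<close> by (simp add: prod.delta)
  finally show ?thesis .
qed

lemma mon_zero_idx [simp]: "mon I w (\<lambda>_. 0) = 1"
  by (simp add: mon_def)

lemma mon_at_zero: "finite I \<Longrightarrow> mon I (\<lambda>_. 0) \<beta> = (if \<forall>i\<in>I. \<beta> i = 0 then 1 else 0)"
  by (auto simp: mon_def prod_zero_iff zero_power)

lemma mindex_zero: "\<beta> \<in> mindex I \<Longrightarrow> \<forall>i\<in>I. \<beta> i = 0 \<Longrightarrow> \<beta> = (\<lambda>_. 0)"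
  by (auto simp: mindex_def)

lemma mdeg_le1_cases:
  assumes "finite I" "\<beta> \<in> mindex I" "mdeg I \<beta> \<le> 1"
  shows "\<beta> = (\<lambda>_. 0) \<or> (\<exists>x\<in>I. \<beta> = unit_idx x)"
proof (cases "\<forall>i\<in>I. \<beta> i = 0")
  case True then show ?thesis using mindex_zero assms by blast
next
  case False
  then obtain x where x: "x \<in> I" "\<beta> x \<noteq> 0" by auto
  have "mdeg I \<beta> = \<beta> x + (\<Sum>i\<in>I-{x}. \<beta> i)"
    unfolding mdeg_def using assms(1) x(1) by (simp add: sum.remove)
  then have "\<beta> x = 1" and "(\<Sum>i\<in>I-{x}. \<beta> i) = 0"
    using assms(3) x(2) by auto
  then have "\<beta> x = 1" and "\<forall>i\<in>I-{x}. \<beta> i = 0"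
    using assms(1) by (simp_all add: sum_eq_0_iff)
  then have "\<beta> = unit_idx x"
    using assms(2) by (auto simp: unit_idx_def mindex_def fun_eq_iff)
  then show ?thesis using x by blast
qed

lemma low_degree_indices:
  assumes "finite I"
  shows "{\<beta>\<in>mindex I. mdeg I \<beta> \<le> 1} = insert (\<lambda>_. 0) (unit_idx ` I)"
proof
  show "{\<beta>\<in>mindex I. mdeg I \<beta> \<le> 1} \<subseteq> insert (\<lambda>_. 0) (unit_idx ` I)"
    using mdeg_le1_cases[OF assms] by blast
  show "insert (\<lambda>_. 0) (unit_idx ` I) \<subseteq> {\<beta>\<in>mindex I. mdeg I \<beta> \<le> 1}"
    using assms by (auto simp: mindex_def mdeg_def unit_idx_def)
qed

lemma unit_idx_inj: "inj unit_idx"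
  by (auto simp: inj_on_def unit_idx_def fun_eq_iff split: if_splits)

lemma unit_idx_nonzero: "unit_idx x \<noteq> (\<lambda>_. 0)"
  by (auto simp: unit_idx_def fun_eq_iff)

lemma finite_mdeg_less: "finite {\<alpha>::'m::finite \<Rightarrow> nat. mdeg UNIV \<alpha> < K}"
proof (rule finite_subset)
  show "{\<alpha>::'m \<Rightarrow> nat. mdeg UNIV \<alpha> < K} \<subseteq> PiE UNIV (\<lambda>_. {..<K})"
  proof
    fix \<alpha> :: "'m \<Rightarrow> nat" assume "\<alpha> \<in> {\<alpha>. mdeg UNIV \<alpha> < K}"
    then have "\<alpha> i < K" for i
      using member_le_sum[of i UNIV \<alpha>] unfolding mdeg_def by fastforce
    then show "\<alpha> \<in> PiE UNIV (\<lambda>_. {..<K})" by (simp add: PiE_UNIV_domain)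
  qed
qed (simp add: finite_PiE)

lemma lampow_bound:
  assumes "\<forall>k. cmod (lam k) \<le> r" "0 \<le> r"
  shows "cmod (lampow lam \<alpha>) \<le> r ^ mdeg UNIV \<alpha>"
  using mon_bound_r[of r UNIV lam \<alpha>] assms by (simp add: lampow_def mon_def)

lemma lampow_le1: "\<forall>k. cmod (lam k) \<le> 1 \<Longrightarrow> cmod (lampow lam \<alpha>) \<le> 1"
  using lampow_bound[of lam 1 \<alpha>] by simp

lemma mon_scaled: "mon UNIV (\<lambda>k. lam k ^ i * z k) \<alpha> = lampow lam \<alpha> ^ i * mon UNIV z \<alpha>"
proof -
  have "mon UNIV (\<lambda>k. lam k ^ i * z k) \<alpha> = (\<Prod>k\<in>UNIV. (lam k ^ \<alpha> k) ^ i * z k ^ \<alpha> k)"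
    unfolding mon_def
    by (rule prod.cong) (simp_all add: power_mult_distrib power_mult[symmetric] mult.commute)
  also have "\<dots> = (\<Prod>k\<in>UNIV. (lam k ^ \<alpha> k) ^ i) * mon UNIV z \<alpha>"
    unfolding mon_def by (rule prod.distrib)
  also have "(\<Prod>k\<in>UNIV. (lam k ^ \<alpha> k) ^ i) = lampow lam \<alpha> ^ i"
    unfolding lampow_def by (rule prod_power_distrib[symmetric])
  finally show ?thesis .
qed

section \<open>Coefficient families of elements of \<open>X\<close>\<close>

text \<open>This is \<open>is_Arep 1 UNIV\<close> with the sup norm replaced by the equivalent
  Euclidean norm, which is more convenient for the library on infinite sums.\<close>
definition is_Xrep :: "(('m::finite \<Rightarrow> nat) \<Rightarrow> complex ^ 'd::finite) \<Rightarrow> (('m \<Rightarrow> complex) \<Rightarrow> complex ^ 'd) \<Rightarrow> bool" where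
  "is_Xrep c f \<longleftrightarrow> (\<lambda>\<alpha>. norm (c \<alpha>)) summable_on UNIV \<and>
     (\<forall>z. (\<forall>i. cmod (z i) \<le> 1) \<longrightarrow> ((\<lambda>\<alpha>. mon UNIV z \<alpha> *s c \<alpha>) has_sum f z) UNIV)"

lemma is_Arep_X: "is_Arep 1 UNIV f c \<longleftrightarrow> is_Xrep c f"
  by (simp add: is_Arep_def is_Xrep_def supv_summable_iff polydisc_def)

text \<open>Uniqueness of coefficients is proved by a discrete Fourier filter: averaging the
  expansion over the points of the torus whose coordinates are \<open>K\<close>-th roots of unity
  keeps exactly the coefficients with index congruent to \<open>\<alpha>\<^sub>0\<close> modulo \<open>K\<close>.\<close>
lemma root_of_unity_sum:
  assumes K: "K \<ge> (1::nat)"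
  shows "(\<Sum>t<K. exp (2 * of_real pi * \<i> / of_nat K) ^ (t * n)) = (if K dvd n then of_nat K else 0)"
proof -
  define \<omega> where "\<omega> = exp (2 * of_real pi * \<i> / of_nat K)"
  have pw: "\<omega> ^ j = exp (2 * of_real pi * \<i> * of_nat j / of_nat K)" for j
    unfolding \<omega>_def exp_of_nat_mult[symmetric] by (simp add: field_simps)
  have eq1: "\<omega> ^ n = 1 \<longleftrightarrow> K dvd n"
    unfolding pw using complex_root_unity_eq_1[OF K] by simp
  have K1: "\<omega> ^ K = 1" unfolding pw using K by simp
  have "(\<Sum>t<K. \<omega> ^ (t * n)) = (\<Sum>t<K. (\<omega> ^ n) ^ t)"
    by (simp add: power_mult[symmetric] mult.commute)
  also have "\<dots> = (if K dvd n then of_nat K else 0)"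
  proof (cases "K dvd n")
    case True then show ?thesis using eq1 by simp
  next
    case False
    then have "\<omega> ^ n \<noteq> 1" using eq1 by simp
    then have "(\<Sum>t<K. (\<omega> ^ n) ^ t) = ((\<omega> ^ n) ^ K - 1) / (\<omega> ^ n - 1)"
      by (rule geometric_sum)
    also have "(\<omega> ^ n) ^ K = 1" by (simp add: power_mult[symmetric] mult.commute power_mult K1)
    finally show ?thesis using False by simp
  qed
  finally show ?thesis unfolding \<omega>_def .
qed

lemma root_filter_sum:
  fixes \<alpha>0 \<alpha> :: "'m::finite \<Rightarrow> nat"
  assumes K: "K \<ge> 1"
  defines "\<omega> \<equiv> exp (2 * of_real pi * \<i> / of_nat K)"
  shows "(\<Sum>j\<in>PiE UNIV (\<lambda>_. {..<K}). (\<Prod>i\<in>UNIV. \<omega> ^ (j i * (K - \<alpha>0 i))) * mon UNIV (\<lambda>i. \<omega> ^ j i) \<alpha>)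
       = (if \<forall>i. K dvd (\<alpha> i + (K - \<alpha>0 i)) then of_nat K ^ CARD('m) else 0)"
proof -
  have "(\<Sum>j\<in>PiE UNIV (\<lambda>_. {..<K}). (\<Prod>i\<in>UNIV. \<omega> ^ (j i * (K - \<alpha>0 i))) * mon UNIV (\<lambda>i. \<omega> ^ j i) \<alpha>)
      = (\<Sum>j\<in>PiE UNIV (\<lambda>_. {..<K}). \<Prod>i\<in>UNIV. \<omega> ^ (j i * (\<alpha> i + (K - \<alpha>0 i))))"
    unfolding mon_def
    by (rule sum.cong)
      (simp_all add: prod.distrib[symmetric] power_mult[symmetric] power_add[symmetric] algebra_simps)
  also have "\<dots> = (\<Prod>i\<in>UNIV. \<Sum>t<K. \<omega> ^ (t * (\<alpha> i + (K - \<alpha>0 i))))"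
    by (subst prod_sum_PiE) auto
  also have "\<dots> = (\<Prod>i\<in>UNIV. if K dvd (\<alpha> i + (K - \<alpha>0 i)) then of_nat K else 0)"
    unfolding \<omega>_def by (simp add: root_of_unity_sum[OF K])
  also have "\<dots> = (if \<forall>i. K dvd (\<alpha> i + (K - \<alpha>0 i)) then of_nat K ^ CARD('m) else 0)"
  proof (cases "\<forall>i. K dvd (\<alpha> i + (K - \<alpha>0 i))")
    case False
    then obtain i where "\<not> K dvd (\<alpha> i + (K - \<alpha>0 i))" by blast
    then show ?thesis using False by (intro trans[OF prod_zero]) auto
  qed simp
  finally show ?thesis .
qed

lemma filtered_coeffs_sum_zero:
  fixes a :: "('m::finite \<Rightarrow> nat) \<Rightarrow> complex"
  assumes K: "K \<ge> 1"
    and z0: "\<And>z. \<forall>i. cmod (z i) \<le> 1 \<Longrightarrow> ((\<lambda>\<alpha>. mon UNIV z \<alpha> * a \<alpha>) has_sum 0) UNIV"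
  shows "(a has_sum 0) {\<alpha>. \<forall>i. K dvd (\<alpha> i + (K - \<alpha>0 i))}"
proof -
  define \<omega> where "\<omega> = exp (2 * of_real pi * \<i> / of_nat K)"
  define J where "J = PiE (UNIV::'m set) (\<lambda>_. {..<K})"
  define wt where "wt j = (\<Prod>i\<in>UNIV. \<omega> ^ (j i * (K - \<alpha>0 i)))" for j :: "'m \<Rightarrow> nat"
  define SK where "SK = {\<alpha>::'m\<Rightarrow>nat. \<forall>i. K dvd (\<alpha> i + (K - \<alpha>0 i))}"
  define c where "c = (of_nat K ^ CARD('m) :: complex)"
  have om1: "cmod (\<omega> ^ n) = 1" for n
    unfolding \<omega>_def norm_power by (simp add: norm_exp_eq_Re)
  have finJ: "finite J" unfolding J_def by (simp add: finite_PiE)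
  define z where "z j = (\<lambda>i. \<omega> ^ j i)" for j :: "'m \<Rightarrow> nat"
  have "((\<lambda>\<alpha>. \<Sum>j\<in>J. wt j * (mon UNIV (z j) \<alpha> * a \<alpha>)) has_sum (\<Sum>j\<in>J. wt j * 0)) UNIV"
    by (rule has_sum_finite_sum[OF finJ], rule has_sum_cmult_right, rule z0) (simp add: z_def om1)
  moreover have "(\<Sum>j\<in>J. wt j * (mon UNIV (z j) \<alpha> * a \<alpha>)) = (if \<alpha> \<in> SK then c else 0) * a \<alpha>" for \<alpha>
  proof -
    have "(\<Sum>j\<in>J. wt j * (mon UNIV (z j) \<alpha> * a \<alpha>)) = (\<Sum>j\<in>J. wt j * mon UNIV (z j) \<alpha>) * a \<alpha>"
      by (simp add: sum_distrib_right mult.assoc)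
    then show ?thesis
      using root_filter_sum[OF K, of \<alpha>0 \<alpha>] unfolding J_def wt_def SK_def c_def \<omega>_def z_def by simp
  qed
  ultimately have "((\<lambda>\<alpha>. (if \<alpha> \<in> SK then c else 0) * a \<alpha>) has_sum 0) UNIV" by simp
  then have "((\<lambda>\<alpha>. c * a \<alpha>) has_sum 0) SK"
    by (subst has_sum_cong_neutral[where T=UNIV and g="\<lambda>\<alpha>. (if \<alpha> \<in> SK then c else 0) * a \<alpha>"]) auto
  moreover have "c \<noteq> 0" using K by (simp add: c_def)
  ultimately show ?thesis unfolding SK_def by (simp add: has_sum_cmult_right_iff)
qed

lemma congruent_below_eq:
  fixes a b K :: nat
  assumes "a < K" "b < K" "K dvd (a + (K - b))"
  shows "a = b"
proof -
  obtain q where q: "a + (K - b) = K * q" using assms(3) by (auto simp: dvd_def)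
  have "0 < K * q" "K * q < K * 2" unfolding q[symmetric] using assms(1,2) by auto
  then have "q = 1" by (simp add: mult_less_cancel1)
  then show ?thesis using q assms(1,2) by simp
qed

text \<open>If a scalar power series vanishes on the unit polydisc, each coefficient is bounded by
  the tail \<open>\<Sum>\<^sub>\<alpha>\<^sub>\<notin>\<^sub>F |a\<^sub>\<alpha>|\<close> for any finite \<open>F\<close>: choose the modulus \<open>K\<close> larger than all entries of
  indices in \<open>F \<union> {\<alpha>\<^sub>0}\<close>; then the residue class of \<open>\<alpha>\<^sub>0\<close> meets \<open>F\<close> only in \<open>\<alpha>\<^sub>0\<close>.\<close>
lemma scalar_coeff_le_tail:
  fixes a :: "('m::finite \<Rightarrow> nat) \<Rightarrow> complex"
  assumes sa: "(\<lambda>\<alpha>. norm (a \<alpha>)) summable_on UNIV"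
    and z0: "\<And>z. \<forall>i. cmod (z i) \<le> 1 \<Longrightarrow> ((\<lambda>\<alpha>. mon UNIV z \<alpha> * a \<alpha>) has_sum 0) UNIV"
    and F: "finite F"
  shows "cmod (a \<alpha>0) \<le> infsum (\<lambda>\<alpha>. norm (a \<alpha>)) (-F)"
proof -
  define K where "K = Suc (Max ((\<lambda>(\<alpha>,i). \<alpha> i) ` (insert \<alpha>0 F \<times> (UNIV::'m set))))"
  have Kgt: "\<alpha> i < K" if "\<alpha> \<in> insert \<alpha>0 F" for \<alpha> i
    unfolding K_def using F that by (auto intro!: le_imp_less_Suc Max_ge)
  define SK where "SK = {\<alpha>::'m\<Rightarrow>nat. \<forall>i. K dvd (\<alpha> i + (K - \<alpha>0 i))}"
  have hSK: "(a has_sum 0) SK" unfolding SK_def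
    by (rule filtered_coeffs_sum_zero[OF _ z0]) (simp_all add: K_def)
  have a0SK: "\<alpha>0 \<in> SK" unfolding SK_def using Kgt[of \<alpha>0] by (simp add: less_imp_le)
  have sub: "SK - {\<alpha>0} \<subseteq> -F"
  proof
    fix \<alpha> assume \<alpha>: "\<alpha> \<in> SK - {\<alpha>0}"
    have "\<alpha> \<notin> F"
    proof
      assume "\<alpha> \<in> F"
      then have "\<alpha> i = \<alpha>0 i" for i
        using \<alpha> by (intro congruent_below_eq[OF Kgt Kgt]) (auto simp: SK_def)
      then show False using \<alpha> by auto
    qed
    then show "\<alpha> \<in> -F" by simp
  qed
  have sF: "(\<lambda>\<alpha>. norm (a \<alpha>)) summable_on (-F)" using sa by (rule summable_on_subset) auto
  have nSK: "(\<lambda>\<alpha>. norm (a \<alpha>)) summable_on (SK - {\<alpha>0})" using sa by (rule summable_on_subset) auto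
  have "infsum a SK = a \<alpha>0 + infsum a (SK - {\<alpha>0})"
    using infsum_Un_disjoint[of a "{\<alpha>0}" "SK - {\<alpha>0}"] a0SK abs_summable_summable[OF nSK]
    by (simp add: insert_absorb)
  then have "a \<alpha>0 = - infsum a (SK - {\<alpha>0})" using infsumI[OF hSK] by (simp add: eq_neg_iff_add_eq_0)
  then have "cmod (a \<alpha>0) = norm (infsum a (SK - {\<alpha>0}))" by simp
  also have "\<dots> \<le> infsum (\<lambda>\<alpha>. norm (a \<alpha>)) (SK - {\<alpha>0})" by (rule norm_infsum_bound[OF nSK])
  also have "\<dots> \<le> infsum (\<lambda>\<alpha>. norm (a \<alpha>)) (-F)" by (rule infsum_mono2[OF nSK sF sub]) auto
  finally show ?thesis .
qed

text \<open>Uniqueness of scalar coefficients: the tails of an absolutely summable family are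
  arbitrarily small.\<close>
lemma scalar_coeffs_zero:
  fixes a :: "('m::finite \<Rightarrow> nat) \<Rightarrow> complex"
  assumes sa: "(\<lambda>\<alpha>. norm (a \<alpha>)) summable_on UNIV"
    and z0: "\<And>z. \<forall>i. cmod (z i) \<le> 1 \<Longrightarrow> ((\<lambda>\<alpha>. mon UNIV z \<alpha> * a \<alpha>) has_sum 0) UNIV"
  shows "a \<alpha>0 = 0"
proof -
  have small: "cmod (a \<alpha>0) \<le> e" if e: "e > 0" for e
  proof -
    obtain F where F: "finite F"
      "dist (sum (\<lambda>\<alpha>. norm (a \<alpha>)) F) (infsum (\<lambda>\<alpha>. norm (a \<alpha>)) UNIV) \<le> e"
      using infsum_finite_approximation[OF sa e] by auto
    have sF: "(\<lambda>\<alpha>. norm (a \<alpha>)) summable_on (-F)" using sa by (rule summable_on_subset) auto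
    have "infsum (\<lambda>\<alpha>. norm (a \<alpha>)) UNIV = sum (\<lambda>\<alpha>. norm (a \<alpha>)) F + infsum (\<lambda>\<alpha>. norm (a \<alpha>)) (-F)"
      using infsum_Un_disjoint[of "\<lambda>\<alpha>. norm (a \<alpha>)" F "-F"] F(1) sF by (simp add: Un_commute)
    then have "infsum (\<lambda>\<alpha>. norm (a \<alpha>)) (-F) \<le> e"
      using F(2) by (simp add: dist_real_def)
    moreover have "cmod (a \<alpha>0) \<le> infsum (\<lambda>\<alpha>. norm (a \<alpha>)) (-F)"
      by (rule scalar_coeff_le_tail[OF sa _ F(1)]) (rule z0)
    ultimately show ?thesis by linarith
  qed
  show ?thesis
  proof (rule ccontr)
    assume "a \<alpha>0 \<noteq> 0"
    then have "cmod (a \<alpha>0) > 0" by simp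
    with small[of "cmod (a \<alpha>0) / 2"] show False by simp
  qed
qed

lemma Xrep_unique:
  assumes "is_Xrep c f" "is_Xrep c' f"
  shows "c = c'"
proof (intro ext iffD2[OF vec_eq_iff] allI)
  fix \<alpha>0 j
  define a where "a \<alpha> = (c \<alpha> - c' \<alpha>) $ j" for \<alpha>
  have "(\<lambda>\<alpha>. norm (c \<alpha>) + norm (c' \<alpha>)) summable_on UNIV"
    using assms unfolding is_Xrep_def by (intro summable_on_add) auto
  moreover have "norm (a \<alpha>) \<le> norm (c \<alpha>) + norm (c' \<alpha>)" for \<alpha>
    unfolding a_def by (rule order_trans[OF Finite_Cartesian_Product.norm_nth_le norm_triangle_ineq4])
  ultimately have sa: "(\<lambda>\<alpha>. norm (a \<alpha>)) summable_on UNIV"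
    by (rule summable_on_comparison_test) simp
  have z0: "((\<lambda>\<alpha>. mon UNIV z \<alpha> * a \<alpha>) has_sum 0) UNIV" if z: "\<forall>i. cmod (z i) \<le> 1" for z
  proof -
    have "((\<lambda>\<alpha>. mon UNIV z \<alpha> *s c \<alpha> - mon UNIV z \<alpha> *s c' \<alpha>) has_sum (f z - f z)) UNIV"
      using assms z unfolding is_Xrep_def by (intro has_sum_diff) auto
    from has_sum_nth[OF this, of j] show ?thesis by (simp add: a_def algebra_simps)
  qed
  have "a \<alpha>0 = 0" by (rule scalar_coeffs_zero[OF sa z0])
  then show "c \<alpha>0 $ j = c' \<alpha>0 $ j" by (simp add: a_def)
qed

text \<open>By uniqueness, any family representing \<open>f\<close> is \<open>coefX f\<close>; so membership, coefficients
  and norm in \<open>X\<close> can all be computed from an arbitrary representing family.\<close>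

lemma Xrep_coefX_of_inX: "inX f \<Longrightarrow> is_Xrep (coefX f) f"
  using someI_ex[of "is_Arep 1 UNIV f"] by (simp add: inA_def coefA_def is_Arep_X)

lemma Xrep_inX: "is_Xrep c f \<Longrightarrow> inX f"
  unfolding inA_def is_Arep_X[symmetric] by blast

lemma Xrep_coefX: "is_Xrep c f \<Longrightarrow> coefX f = c"
  using Xrep_coefX_of_inX Xrep_inX Xrep_unique by blast

lemma Xrep_normX: "is_Xrep c f \<Longrightarrow> normX f = infsum (\<lambda>\<alpha>. supv (c \<alpha>)) UNIV"
  unfolding normA_def by (simp add: Xrep_coefX)

lemma Xrep_supv_summable: "is_Xrep c f \<Longrightarrow> (\<lambda>\<alpha>. supv (c \<alpha>)) summable_on UNIV"
  unfolding is_Xrep_def supv_summable_iff by simp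

lemma Xrep_normX_nonneg: "is_Xrep c f \<Longrightarrow> 0 \<le> normX f"
  by (simp add: Xrep_normX infsum_nonneg supv_nonneg)

lemma normX_nonneg: "inX f \<Longrightarrow> 0 \<le> normX f"
  by (rule Xrep_normX_nonneg[OF Xrep_coefX_of_inX])

lemma Xrep_zero: "is_Xrep (\<lambda>_. 0) (\<lambda>_. 0)"
  by (simp add: is_Xrep_def)

lemma normX_zero: "normX (\<lambda>_. 0 :: complex^'d::finite) = 0"
  by (rule trans[OF Xrep_normX[OF Xrep_zero]]) (simp add: supv_eq_0)

lemma Xrep_eqX: "is_Xrep c f \<Longrightarrow> is_Xrep c g \<Longrightarrow> eqX f g"
  unfolding eqX_def is_Xrep_def polydisc_def using has_sum_unique by blast

lemma eqX_Arep: "eqX f g \<Longrightarrow> is_Arep 1 UNIV f = is_Arep 1 UNIV g"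
  unfolding eqX_def is_Arep_def by (intro ext) auto

lemma eqX_coefX: "eqX f g \<Longrightarrow> coefX f = coefX g"
  unfolding coefA_def by (simp add: eqX_Arep)

lemma eqX_normX: "eqX f g \<Longrightarrow> normX f = normX g"
  unfolding normA_def by (simp add: eqX_coefX)

lemma eqX_Xrep: "eqX f g \<Longrightarrow> is_Xrep c f = is_Xrep c g"
  using eqX_Arep[of f g] is_Arep_X by metis

lemma Xrep_add:
  assumes "is_Xrep ca f" "is_Xrep cb g"
  shows "is_Xrep (\<lambda>\<alpha>. ca \<alpha> + cb \<alpha>) (\<lambda>z. f z + g z)"
  unfolding is_Xrep_def
proof (intro conjI allI impI)
  have "(\<lambda>\<alpha>. norm (ca \<alpha>) + norm (cb \<alpha>)) summable_on UNIV"
    using assms unfolding is_Xrep_def by (intro summable_on_add) auto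
  then show "(\<lambda>\<alpha>. norm (ca \<alpha> + cb \<alpha>)) summable_on UNIV"
    by (rule summable_on_comparison_test) (auto intro: norm_triangle_ineq)
next
  fix z :: "'a \<Rightarrow> complex" assume "\<forall>i. cmod (z i) \<le> 1"
  then have "((\<lambda>\<alpha>. mon UNIV z \<alpha> *s ca \<alpha> + mon UNIV z \<alpha> *s cb \<alpha>) has_sum f z + g z) UNIV"
    using assms unfolding is_Xrep_def by (intro has_sum_add) auto
  then show "((\<lambda>\<alpha>. mon UNIV z \<alpha> *s (ca \<alpha> + cb \<alpha>)) has_sum f z + g z) UNIV"
    by (simp add: vector_add_ldistrib)
qed

lemma Xrep_smult:
  assumes "is_Xrep c f"
  shows "is_Xrep (\<lambda>\<alpha>. k *s c \<alpha>) (\<lambda>z. k *s f z)"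
  unfolding is_Xrep_def
proof (intro conjI allI impI)
  have "(\<lambda>\<alpha>. cmod k * norm (c \<alpha>)) summable_on UNIV"
    using assms unfolding is_Xrep_def by (intro summable_on_cmult_right) auto
  then show "(\<lambda>\<alpha>. norm (k *s c \<alpha>)) summable_on UNIV" by (simp add: norm_vsmult)
next
  fix z :: "'a \<Rightarrow> complex" assume "\<forall>i. cmod (z i) \<le> 1"
  then have "((\<lambda>\<alpha>. k *s (mon UNIV z \<alpha> *s c \<alpha>)) has_sum k *s f z) UNIV"
    using assms unfolding is_Xrep_def by (intro has_sum_vsmult) auto
  then show "((\<lambda>\<alpha>. mon UNIV z \<alpha> *s (k *s c \<alpha>)) has_sum k *s f z) UNIV"
    by (simp add: vector_smult_assoc mult.commute)
qed

lemma Xrep_diff: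
  assumes "is_Xrep ca f" "is_Xrep cb g"
  shows "is_Xrep (\<lambda>\<alpha>. ca \<alpha> - cb \<alpha>) (\<lambda>z. f z - g z)"
  using Xrep_add[OF assms(1) Xrep_smult[OF assms(2), of "-1"]]
  by (simp add: vector_sneg_minus1[symmetric])

lemma Xrep_sum:
  assumes "finite S" "\<And>i. i \<in> S \<Longrightarrow> is_Xrep (c i) (f i)"
  shows "is_Xrep (\<lambda>\<alpha>. \<Sum>i\<in>S. c i \<alpha>) (\<lambda>z. \<Sum>i\<in>S. f i z)"
  using assms
proof (induction S rule: finite_induct)
  case empty
  then show ?case by (simp add: is_Xrep_def)
next
  case (insert x F)
  then show ?case
    using Xrep_add[of "c x" "f x" "\<lambda>\<alpha>. \<Sum>i\<in>F. c i \<alpha>" "\<lambda>z. \<Sum>i\<in>F. f i z"] by simp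
qed

lemma Xrep_matmul:
  assumes "is_Xrep c h"
  shows "is_Xrep (\<lambda>\<alpha>. A *v c \<alpha>) (\<lambda>z. A *v h z)"
  unfolding is_Xrep_def
proof (intro conjI allI impI)
  have "(\<lambda>\<alpha>. entry_norm A * norm (c \<alpha>)) summable_on UNIV"
    using assms unfolding is_Xrep_def by (intro summable_on_cmult_right) auto
  then show "(\<lambda>\<alpha>. norm (A *v c \<alpha>)) summable_on UNIV"
    by (rule summable_on_comparison_test) (auto simp: norm_mv_le)
next
  fix z :: "'a \<Rightarrow> complex" assume z: "\<forall>i. cmod (z i) \<le> 1"
  then have "((\<lambda>\<alpha>. A *v (mon UNIV z \<alpha> *s c \<alpha>)) has_sum A *v h z) UNIV"
    using assms unfolding is_Xrep_def by (intro has_sum_bounded_linear[OF bounded_linear_mv]) auto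
  then show "((\<lambda>\<alpha>. mon UNIV z \<alpha> *s (A *v c \<alpha>)) has_sum A *v h z) UNIV"
    by (simp add: vector_scalar_commute)
qed

lemma Xrep_scaled:
  assumes lam: "\<forall>k. cmod (lam k) \<le> 1" and "is_Xrep c h"
  shows "is_Xrep (\<lambda>\<alpha>. (lampow lam \<alpha>)^i *s c \<alpha>) (\<lambda>z. h (\<lambda>k. lam k ^ i * z k))"
  unfolding is_Xrep_def
proof (intro conjI allI impI)
  have "(\<lambda>\<alpha>. norm (c \<alpha>)) summable_on UNIV" using assms unfolding is_Xrep_def by auto
  then show "(\<lambda>\<alpha>. norm ((lampow lam \<alpha>)^i *s c \<alpha>)) summable_on UNIV"
    by (rule summable_on_comparison_test)
      (auto simp: norm_vsmult norm_power lampow_le1[OF lam] power_le_one mult_left_le_one_le)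
next
  fix z :: "'a \<Rightarrow> complex" assume z: "\<forall>i. cmod (z i) \<le> 1"
  have "cmod (lam k ^ i * z k) \<le> 1" for k
    unfolding norm_mult norm_power using lam z by (simp add: mult_le_one power_le_one)
  then have hs: "((\<lambda>\<alpha>. mon UNIV (\<lambda>k. lam k ^ i * z k) \<alpha> *s c \<alpha>) has_sum h (\<lambda>k. lam k ^ i * z k)) UNIV"
    using assms(2) unfolding is_Xrep_def by auto
  have eq: "mon UNIV z \<alpha> *s ((lampow lam \<alpha>)^i *s c \<alpha>) = mon UNIV (\<lambda>k. lam k ^ i * z k) \<alpha> *s c \<alpha>" for \<alpha>
    unfolding mon_scaled vector_smult_assoc by (simp add: mult.commute)
  show "((\<lambda>\<alpha>. mon UNIV z \<alpha> *s ((lampow lam \<alpha>)^i *s c \<alpha>)) has_sum h (\<lambda>k. lam k ^ i * z k)) UNIV"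
    by (simp only: eq hs)
qed

lemma Xrep_of_summable:
  assumes "(\<lambda>\<alpha>. norm (c \<alpha>)) summable_on UNIV"
  shows "is_Xrep c (\<lambda>z. infsum (\<lambda>\<alpha>. mon UNIV z \<alpha> *s c \<alpha>) UNIV)"
  unfolding is_Xrep_def
proof (intro conjI allI impI assms)
  fix z :: "'a \<Rightarrow> complex" assume z: "\<forall>i. cmod (z i) \<le> 1"
  have "(\<lambda>\<alpha>. norm (mon UNIV z \<alpha> *s c \<alpha>)) summable_on UNIV"
  proof (rule summable_on_comparison_test[OF assms])
    fix \<alpha>
    have "cmod (mon UNIV z \<alpha>) \<le> 1" using z by (intro mon_bound) auto
    then show "norm (mon UNIV z \<alpha> *s c \<alpha>) \<le> norm (c \<alpha>)"
      by (simp add: norm_vsmult mult_left_le_one_le)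
  qed simp
  then show "((\<lambda>\<alpha>. mon UNIV z \<alpha> *s c \<alpha>) has_sum infsum (\<lambda>\<alpha>. mon UNIV z \<alpha> *s c \<alpha>) UNIV) UNIV"
    by (simp add: abs_summable_summable)
qed

lemma normX_le_sum_norm:
  assumes "is_Xrep c f"
  shows "normX f \<le> infsum (\<lambda>\<alpha>. norm (c \<alpha>)) UNIV"
  unfolding Xrep_normX[OF assms] using assms unfolding is_Xrep_def
  by (intro infsum_mono) (auto simp: supv_summable_iff supv_le_norm)

lemma sum_norm_le_normX:
  fixes c :: "_ \<Rightarrow> complex^'d::finite"
  assumes "is_Xrep c f"
  shows "infsum (\<lambda>\<alpha>. norm (c \<alpha>)) UNIV \<le> real CARD('d) * normX f"
proof -
  have "infsum (\<lambda>\<alpha>. norm (c \<alpha>)) UNIV \<le> infsum (\<lambda>\<alpha>. real CARD('d) * supv (c \<alpha>)) UNIV"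
    using assms unfolding is_Xrep_def
    by (intro infsum_mono) (auto simp: supv_summable_iff norm_le_supv intro: summable_on_cmult_right)
  also have "\<dots> = real CARD('d) * normX f"
    by (simp add: infsum_cmult_right Xrep_normX[OF assms] Xrep_supv_summable[OF assms])
  finally show ?thesis .
qed

lemma Xrep_value_bound:
  assumes "is_Xrep c f" "\<forall>i. cmod (z i) \<le> 1"
  shows "norm (f z) \<le> infsum (\<lambda>\<alpha>. norm (c \<alpha>)) UNIV"
proof (rule norm_infsum_le)
  show "((\<lambda>\<alpha>. mon UNIV z \<alpha> *s c \<alpha>) has_sum f z) UNIV" using assms unfolding is_Xrep_def by auto
  show "((\<lambda>\<alpha>. norm (c \<alpha>)) has_sum infsum (\<lambda>\<alpha>. norm (c \<alpha>)) UNIV) UNIV"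
    using assms unfolding is_Xrep_def by simp
  fix \<alpha>
  have "cmod (mon UNIV z \<alpha>) \<le> 1" using assms by (intro mon_bound) auto
  then show "norm (mon UNIV z \<alpha> *s c \<alpha>) \<le> norm (c \<alpha>)"
    by (simp add: norm_vsmult mult_left_le_one_le)
qed

lemma normX_zero_eqX:
  assumes "inX f" "normX f = 0"
  shows "eqX f (\<lambda>_. 0)"
proof -
  have c: "is_Xrep (coefX f) f" by (rule Xrep_coefX_of_inX[OF assms(1)])
  have "supv (coefX f \<alpha>) = 0" for \<alpha>
    using nonneg_infsum_le_0D[of "\<lambda>\<alpha>. supv (coefX f \<alpha>)" UNIV \<alpha>] assms Xrep_supv_summable[OF c]
    by (simp add: Xrep_normX[OF c] supv_nonneg)
  then have "coefX f = (\<lambda>_. 0)" by (auto simp: supv_eq_0)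
  moreover have "is_Xrep (\<lambda>_. 0) (\<lambda>_. 0::complex^'d)" by (simp add: is_Xrep_def)
  ultimately show ?thesis using Xrep_eqX c by metis
qed

lemma normX_triangle:
  assumes "inX f" "inX g"
  shows "normX (\<lambda>z. f z + g z) \<le> normX f + normX g"
proof -
  note cf = Xrep_coefX_of_inX[OF assms(1)] and cg = Xrep_coefX_of_inX[OF assms(2)]
  note s = Xrep_supv_summable[OF cf] Xrep_supv_summable[OF cg]
  have "normX (\<lambda>z. f z + g z) = infsum (\<lambda>\<alpha>. supv (coefX f \<alpha> + coefX g \<alpha>)) UNIV"
    by (rule Xrep_normX[OF Xrep_add[OF cf cg]])
  also have "\<dots> \<le> infsum (\<lambda>\<alpha>. supv (coefX f \<alpha>) + supv (coefX g \<alpha>)) UNIV"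
    using Xrep_supv_summable[OF Xrep_add[OF cf cg]] s
    by (intro infsum_mono summable_on_add) (auto intro: supv_add)
  also have "\<dots> = normX f + normX g"
    using s by (simp add: infsum_add Xrep_normX[OF cf] Xrep_normX[OF cg])
  finally show ?thesis .
qed

lemma normX_smult:
  assumes "inX f"
  shows "normX (\<lambda>z. k *s f z) = cmod k * normX f"
proof -
  have c: "is_Xrep (coefX f) f" by (rule Xrep_coefX_of_inX[OF assms])
  show ?thesis
    by (simp add: Xrep_normX[OF Xrep_smult[OF c]] Xrep_normX[OF c] supv_vsmult infsum_cmult_right
        Xrep_supv_summable[OF c])
qed

lemma inX_smult: "inX f \<Longrightarrow> inX (\<lambda>z. k *s f z)"
  using Xrep_inX Xrep_smult Xrep_coefX_of_inX by blast

lemma inX_diff: "inX f \<Longrightarrow> inX g \<Longrightarrow> inX (\<lambda>z. f z - g z)"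
  using Xrep_inX Xrep_diff Xrep_coefX_of_inX by blast

lemma normX_diff_le:
  assumes "inX f" "inX g"
  shows "normX (\<lambda>z. f z - g z) \<le> normX f + normX g"
proof -
  have eq: "(\<lambda>z. f z - g z) = (\<lambda>z. f z + (-1) *s g z)"
    by (simp add: fun_eq_iff vector_sneg_minus1[symmetric])
  have "normX (\<lambda>z. f z - g z) \<le> normX f + normX (\<lambda>z. (-1) *s g z)"
    unfolding eq by (rule normX_triangle[OF assms(1) inX_smult[OF assms(2)]])
  also have "normX (\<lambda>z. (-1) *s g z) = normX g" using normX_smult[OF assms(2), of "-1"] by simp
  finally show ?thesis .
qed

section \<open>Uniqueness of the derivative in \<open>X\<close>\<close>

lemma nonpos_if_le_all_multiples:
  fixes x a :: real
  assumes "0 \<le> a" "\<And>\<epsilon>. \<epsilon> > 0 \<Longrightarrow> x \<le> \<epsilon> * a"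
  shows "x \<le> 0"
proof (rule ccontr)
  assume "\<not> x \<le> 0"
  then have x: "x > 0" by simp
  have "x \<le> x / (2 * (a + 1)) * a" using assms(1) x by (intro assms(2)) simp
  also have "\<dots> = x * (a / (2 * (a + 1)))" by simp
  also have "\<dots> < x * 1" using assms(1) x by (intro mult_strict_left_mono) (auto simp: field_simps)
  finally show False by simp
qed

lemma bounded_linX_inX: "bounded_linX L \<Longrightarrow> inX f \<Longrightarrow> inX (L f)"
  unfolding bounded_linX_def by blast

lemma bounded_linX_smult: "bounded_linX L \<Longrightarrow> inX f \<Longrightarrow> eqX (L (\<lambda>z. c *s f z)) (\<lambda>z. c *s L f z)"
  unfolding bounded_linX_def by blast

lemma DPhi0_bounded_linX: "is_DPhi0 \<Phi> L \<Longrightarrow> bounded_linX L"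
  by (simp add: is_DPhi0_def)

context
  fixes \<Phi> :: "(('m::finite \<Rightarrow> complex) \<Rightarrow> complex ^ 'd::finite) \<Rightarrow> (('m \<Rightarrow> complex) \<Rightarrow> complex ^ 'd)"
    and L1 L2 :: "(('m \<Rightarrow> complex) \<Rightarrow> complex ^ 'd) \<Rightarrow> (('m \<Rightarrow> complex) \<Rightarrow> complex ^ 'd)"
  assumes L1: "is_DPhi0 \<Phi> L1" and L2: "is_DPhi0 \<Phi> L2"
    and Phi0: "inX (\<Phi> (\<lambda>_. 0))"
    and Phi_small: "\<exists>\<delta>>0. \<forall>h. inX h \<and> normX h < \<delta> \<longrightarrow> inX (\<Phi> h)"
begin

text \<open>Both \<open>L\<^sub>1\<close> and \<open>L\<^sub>2\<close> approximate \<open>\<Phi>(h) - \<Phi>(0)\<close> to first order, hence so well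
  that their difference is \<open>o(\<parallel>h\<parallel>)\<close>.\<close>
lemma derivatives_close:
  assumes e: "\<epsilon> > 0"
  shows "\<exists>\<delta>>0. \<forall>g. inX g \<and> normX g < \<delta> \<longrightarrow> normX (\<lambda>z. L1 g z - L2 g z) \<le> \<epsilon> * normX g"
proof -
  have e2: "\<epsilon>/2 > 0" using e by simp
  obtain \<delta>1 where d1: "\<delta>1 > 0" and h1: "\<And>g. inX g \<and> normX g < \<delta>1 \<Longrightarrow>
      normX (\<lambda>z. \<Phi> g z - \<Phi> (\<lambda>_. 0) z - L1 g z) \<le> \<epsilon>/2 * normX g"
    using L1 e2 unfolding is_DPhi0_def by blast
  obtain \<delta>2 where d2: "\<delta>2 > 0" and h2: "\<And>g. inX g \<and> normX g < \<delta>2 \<Longrightarrow>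
      normX (\<lambda>z. \<Phi> g z - \<Phi> (\<lambda>_. 0) z - L2 g z) \<le> \<epsilon>/2 * normX g"
    using L2 e2 unfolding is_DPhi0_def by blast
  obtain \<delta>3 where d3: "\<delta>3 > 0" and h3: "\<And>g. inX g \<and> normX g < \<delta>3 \<Longrightarrow> inX (\<Phi> g)"
    using Phi_small by blast
  show ?thesis
  proof (intro exI[of _ "min \<delta>1 (min \<delta>2 \<delta>3)"] conjI allI impI)
    fix g :: "('m \<Rightarrow> complex) \<Rightarrow> complex^'d" assume g: "inX g \<and> normX g < min \<delta>1 (min \<delta>2 \<delta>3)"
    have inL: "inX (L1 g)" "inX (L2 g)"
      using g by (simp_all add: bounded_linX_inX[OF DPhi0_bounded_linX[OF L1]]
          bounded_linX_inX[OF DPhi0_bounded_linX[OF L2]])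
    define R1 where "R1 = (\<lambda>z. \<Phi> g z - \<Phi> (\<lambda>_. 0) z - L1 g z)"
    define R2 where "R2 = (\<lambda>z. \<Phi> g z - \<Phi> (\<lambda>_. 0) z - L2 g z)"
    have "inX (\<Phi> g)" using h3 g by simp
    then have "inX R1" "inX R2"
      unfolding R1_def R2_def using Phi0 inL by (simp_all add: inX_diff)
    moreover have "(\<lambda>z. L1 g z - L2 g z) = (\<lambda>z. R2 z - R1 z)" by (simp add: R1_def R2_def fun_eq_iff)
    ultimately have "normX (\<lambda>z. L1 g z - L2 g z) \<le> normX R2 + normX R1" by (simp add: normX_diff_le)
    also have "\<dots> \<le> \<epsilon>/2 * normX g + \<epsilon>/2 * normX g"
      unfolding R1_def R2_def using g by (intro add_mono h1 h2) auto
    finally show "normX (\<lambda>z. L1 g z - L2 g z) \<le> \<epsilon> * normX g" by simp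
  qed (use d1 d2 d3 in auto)
qed

text \<open>By linearity the \<open>o(\<parallel>h\<parallel>)\<close> estimate rescales to every \<open>h\<close>, so the difference vanishes.\<close>
lemma derivatives_agree:
  assumes h: "inX h"
  shows "eqX (L1 h) (L2 h)"
proof -
  have bL: "bounded_linX L1" "bounded_linX L2" using L1 L2 by (simp_all add: DPhi0_bounded_linX)
  have D: "inX (\<lambda>z. L1 h z - L2 h z)"
    using h by (intro inX_diff bounded_linX_inX[OF bL(1)] bounded_linX_inX[OF bL(2)])
  have h0: "0 \<le> normX h" by (rule normX_nonneg[OF h])
  have small: "normX (\<lambda>z. L1 h z - L2 h z) \<le> \<epsilon> * normX h" if e: "\<epsilon> > 0" for \<epsilon>
  proof -
    obtain \<delta> where dpos: "\<delta> > 0" and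
      hd: "\<And>g. inX g \<and> normX g < \<delta> \<Longrightarrow> normX (\<lambda>z. L1 g z - L2 g z) \<le> \<epsilon> * normX g"
      using derivatives_close[OF e] by blast
    define t where "t = \<delta> / (2 * (normX h + 1))"
    have tpos: "t > 0" unfolding t_def using dpos h0 by simp
    define g where "g = (\<lambda>z. complex_of_real t *s h z)"
    have ng: "normX g = t * normX h" unfolding g_def using normX_smult[OF h] tpos by simp
    have "t * normX h < \<delta>"
    proof -
      have "t * normX h = \<delta> * (normX h / (2 * (normX h + 1)))" unfolding t_def by simp
      also have "\<dots> < \<delta> * 1" using dpos h0 by (intro mult_strict_left_mono) (auto simp: field_simps)
      finally show ?thesis by simp
    qed
    moreover have "inX g" unfolding g_def by (rule inX_smult[OF h])
    ultimately have bnd: "normX (\<lambda>z. L1 g z - L2 g z) \<le> \<epsilon> * (t * normX h)"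
      using hd[of g] ng by simp
    have "eqX (L1 g) (\<lambda>z. complex_of_real t *s L1 h z)" "eqX (L2 g) (\<lambda>z. complex_of_real t *s L2 h z)"
      unfolding g_def by (simp_all add: bounded_linX_smult[OF bL(1) h] bounded_linX_smult[OF bL(2) h])
    then have "eqX (\<lambda>z. L1 g z - L2 g z) (\<lambda>z. complex_of_real t *s (L1 h z - L2 h z))"
      unfolding eqX_def by (simp add: vector_ssub_ldistrib)
    then have "normX (\<lambda>z. L1 g z - L2 g z) = t * normX (\<lambda>z. L1 h z - L2 h z)"
      using normX_smult[OF D, of "complex_of_real t"] tpos by (simp add: eqX_normX)
    then have "t * normX (\<lambda>z. L1 h z - L2 h z) \<le> t * (\<epsilon> * normX h)"
      using bnd by (simp add: mult.left_commute)
    then show ?thesis using tpos by simp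
  qed
  have "normX (\<lambda>z. L1 h z - L2 h z) \<le> 0" by (rule nonpos_if_le_all_multiples[OF h0 small])
  then have "normX (\<lambda>z. L1 h z - L2 h z) = 0" using normX_nonneg[OF D] by simp
  then show ?thesis using normX_zero_eqX[OF D] unfolding eqX_def by simp
qed

end

section \<open>Taylor expansion of the nonlinearity \<open>Z\<close>\<close>

context
  fixes \<rho> :: real and I :: "'i set" and Z :: "('i \<Rightarrow> complex) \<Rightarrow> complex^'d::finite" and cZ
  assumes finI: "finite I" and rho: "\<rho> > 0" and repZ: "is_Arep \<rho> I Z cZ" and Z0: "Z (\<lambda>_. 0) = 0"
begin

lemma cZ_norm_summable: "(\<lambda>\<beta>. norm (cZ \<beta>) * \<rho> ^ mdeg I \<beta>) summable_on mindex I"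
proof -
  have "(\<lambda>\<beta>. real CARD('d) * (supv (cZ \<beta>) * \<rho> ^ mdeg I \<beta>)) summable_on mindex I"
    using repZ unfolding is_Arep_def by (intro summable_on_cmult_right) auto
  then show ?thesis
    by (rule summable_on_comparison_test)
      (use rho in \<open>auto intro!: mult_right_mono simp: norm_le_supv mult.assoc[symmetric]\<close>)
qed

lemma cZ_tail_summable: "(\<lambda>\<beta>. norm (cZ \<beta>) * \<rho> ^ mdeg I \<beta>) summable_on deg_ge2 I"
  by (rule summable_on_subset[OF cZ_norm_summable]) (auto simp: deg_ge2_def)

lemma Z_has_sum: "w \<in> polydisc \<rho> I \<Longrightarrow> ((\<lambda>\<beta>. mon I w \<beta> *s cZ \<beta>) has_sum Z w) (mindex I)"
  using repZ unfolding is_Arep_def by auto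

lemma Z_term_summable:
  assumes "w \<in> polydisc \<rho> I"
  shows "(\<lambda>\<beta>. norm (mon I w \<beta> *s cZ \<beta>)) summable_on mindex I"
proof (rule summable_on_comparison_test[OF cZ_norm_summable])
  fix \<beta>
  have "cmod (mon I w \<beta>) \<le> \<rho> ^ mdeg I \<beta>"
    using assms rho by (intro mon_bound_r) (auto simp: polydisc_def)
  then show "norm (mon I w \<beta> *s cZ \<beta>) \<le> norm (cZ \<beta>) * \<rho> ^ mdeg I \<beta>"
    by (simp add: norm_vsmult mult.commute mult_left_mono)
qed simp

lemma cZ_zero: "cZ (\<lambda>_. 0) = 0"
proof -
  have "(\<lambda>_. 0) \<in> polydisc \<rho> I" using rho by (simp add: polydisc_def)
  then have "((\<lambda>\<beta>. mon I (\<lambda>_. 0) \<beta> *s cZ \<beta>) has_sum Z (\<lambda>_. 0)) (mindex I)" by (rule Z_has_sum)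
  moreover have "((\<lambda>\<beta>. mon I (\<lambda>_. 0) \<beta> *s cZ \<beta>) has_sum cZ (\<lambda>_. 0)) (mindex I)"
  proof -
    have "((\<lambda>\<beta>. mon I (\<lambda>_. 0) \<beta> *s cZ \<beta>) has_sum cZ (\<lambda>_. 0)) {\<lambda>_. 0}"
      by (rule has_sum_finiteI) simp_all
    moreover have "(\<lambda>_. 0) \<in> mindex I" by (simp add: mindex_def)
    ultimately show ?thesis
      by (subst (asm) has_sum_cong_neutral[where T="mindex I"])
        (auto simp: mon_at_zero[OF finI] dest: mindex_zero)
  qed
  ultimately show ?thesis using Z0 has_sum_unique by metis
qed

lemma Z_split:
  assumes w: "w \<in> polydisc \<rho> I"
  shows "Z w = (\<Sum>x\<in>I. w x *s cZ (unit_idx x)) + infsum (\<lambda>\<beta>. mon I w \<beta> *s cZ \<beta>) (deg_ge2 I)"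
proof -
  define f where "f \<beta> = mon I w \<beta> *s cZ \<beta>" for \<beta>
  define L where "L = {\<beta>\<in>mindex I. mdeg I \<beta> \<le> 1}"
  have sm: "f summable_on mindex I"
    unfolding f_def by (rule abs_summable_summable[OF Z_term_summable[OF w]])
  have un: "mindex I = L \<union> deg_ge2 I" by (auto simp: L_def deg_ge2_def)
  have L: "L = insert (\<lambda>_. 0) (unit_idx ` I)" unfolding L_def by (rule low_degree_indices[OF finI])
  have "Z w = infsum f (mindex I)" unfolding f_def using Z_has_sum[OF w] by (simp add: infsumI)
  also have "\<dots> = infsum f L + infsum f (deg_ge2 I)"
  proof (subst un, rule infsum_Un_disjoint)
    show "f summable_on L" "f summable_on deg_ge2 I"
      by (auto simp: deg_ge2_def L_def intro: summable_on_subset_banach[OF sm])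
  qed (auto simp: deg_ge2_def L_def)
  also have "infsum f L = f (\<lambda>_. 0) + sum f (unit_idx ` I)"
  proof -
    have "(\<lambda>_. 0) \<notin> unit_idx ` I" using unit_idx_nonzero by (metis imageE)
    then show ?thesis using finI unfolding L by (simp add: infsum_finite)
  qed
  also have "sum f (unit_idx ` I) = (\<Sum>x\<in>I. f (unit_idx x))"
    by (rule sum.reindex_cong[where l=unit_idx]) (auto intro: inj_on_subset[OF unit_idx_inj])
  also have "\<dots> = (\<Sum>x\<in>I. w x *s cZ (unit_idx x))"
    by (simp add: f_def mon_unit_idx[OF finI])
  finally show ?thesis by (simp add: f_def cZ_zero)
qed

lemma Z_tail_bound:
  assumes r: "0 \<le> r" "r \<le> \<rho>" and w: "\<forall>i\<in>I. cmod (w i) \<le> r"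
  shows "norm (infsum (\<lambda>\<beta>. mon I w \<beta> *s cZ \<beta>) (deg_ge2 I))
           \<le> (r/\<rho>)^2 * infsum (\<lambda>\<beta>. norm (cZ \<beta>) * \<rho> ^ mdeg I \<beta>) (deg_ge2 I)"
proof -
  have wp: "w \<in> polydisc \<rho> I" using w r by (auto simp: polydisc_def)
  have s1: "(\<lambda>\<beta>. norm (mon I w \<beta> *s cZ \<beta>)) summable_on deg_ge2 I"
    by (rule summable_on_subset[OF Z_term_summable[OF wp]]) (auto simp: deg_ge2_def)
  have "norm (infsum (\<lambda>\<beta>. mon I w \<beta> *s cZ \<beta>) (deg_ge2 I))
      \<le> infsum (\<lambda>\<beta>. norm (mon I w \<beta> *s cZ \<beta>)) (deg_ge2 I)"
    by (rule norm_infsum_bound[OF s1])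
  also have "\<dots> \<le> infsum (\<lambda>\<beta>. (r/\<rho>)^2 * (norm (cZ \<beta>) * \<rho> ^ mdeg I \<beta>)) (deg_ge2 I)"
  proof (rule infsum_mono[OF s1 summable_on_cmult_right[OF cZ_tail_summable]])
    fix \<beta> assume "\<beta> \<in> deg_ge2 I"
    then have "cmod (mon I w \<beta>) \<le> (r/\<rho>)^2 * \<rho> ^ mdeg I \<beta>"
      using mon_bound_r[OF r(1) w] pow_le_quadratic_factor[OF r] by (auto simp: deg_ge2_def intro: order_trans)
    then show "norm (mon I w \<beta> *s cZ \<beta>) \<le> (r/\<rho>)^2 * (norm (cZ \<beta>) * \<rho> ^ mdeg I \<beta>)"
      unfolding norm_vsmult by (metis (no_types, lifting) mult.assoc mult.commute mult_right_mono norm_ge_zero)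
  qed
  also have "\<dots> = (r/\<rho>)^2 * infsum (\<lambda>\<beta>. norm (cZ \<beta>) * \<rho> ^ mdeg I \<beta>) (deg_ge2 I)"
    by (rule infsum_cmult_right) (use cZ_tail_summable in auto)
  finally show ?thesis .
qed

lemma cZ_tail_summable_r:
  assumes "0 \<le> r" "r \<le> \<rho>"
  shows "(\<lambda>\<beta>. norm (cZ \<beta>) * r ^ mdeg I \<beta>) summable_on deg_ge2 I"
  by (rule summable_on_comparison_test[OF cZ_tail_summable])
    (use assms in \<open>auto intro: mult_left_mono power_mono\<close>)

lemma cZ_tail_weight_le:
  assumes r: "0 \<le> r" "r \<le> \<rho>"
  shows "infsum (\<lambda>\<beta>. norm (cZ \<beta>) * r ^ mdeg I \<beta>) (deg_ge2 I)
           \<le> (r/\<rho>)^2 * infsum (\<lambda>\<beta>. norm (cZ \<beta>) * \<rho> ^ mdeg I \<beta>) (deg_ge2 I)"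
proof -
  have "infsum (\<lambda>\<beta>. norm (cZ \<beta>) * r ^ mdeg I \<beta>) (deg_ge2 I)
      \<le> infsum (\<lambda>\<beta>. (r/\<rho>)^2 * (norm (cZ \<beta>) * \<rho> ^ mdeg I \<beta>)) (deg_ge2 I)"
  proof (rule infsum_mono[OF cZ_tail_summable_r[OF r] summable_on_cmult_right[OF cZ_tail_summable]])
    fix \<beta> assume "\<beta> \<in> deg_ge2 I"
    then have "r ^ mdeg I \<beta> \<le> (r/\<rho>)^2 * \<rho> ^ mdeg I \<beta>"
      by (intro pow_le_quadratic_factor[OF r]) (simp add: deg_ge2_def)
    then show "norm (cZ \<beta>) * r ^ mdeg I \<beta> \<le> (r/\<rho>)^2 * (norm (cZ \<beta>) * \<rho> ^ mdeg I \<beta>)"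
      by (metis mult.left_commute mult_left_mono norm_ge_zero)
  qed
  also have "\<dots> = (r/\<rho>)^2 * infsum (\<lambda>\<beta>. norm (cZ \<beta>) * \<rho> ^ mdeg I \<beta>) (deg_ge2 I)"
    by (rule infsum_cmult_right) (use cZ_tail_summable in auto)
  finally show ?thesis .
qed

end

lemma deriv_of_quadratic_remainder:
  fixes g :: "complex \<Rightarrow> complex"
  assumes \<rho>: "\<rho> > 0" and rem: "\<And>t. cmod t \<le> \<rho> \<Longrightarrow> cmod (g t - g 0 - t * c) \<le> K * (cmod t)^2"
  shows "deriv g 0 = c"
proof -
  have "((\<lambda>y. (g y - g 0) / (y - 0) - c) \<longlongrightarrow> 0) (at 0)"
  proof (rule Lim_null_comparison)
    show "\<forall>\<^sub>F y in at 0. norm ((g y - g 0) / (y - 0) - c) \<le> cmod y * K"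
      unfolding eventually_at
    proof (intro exI[of _ \<rho>] conjI \<rho> ballI impI)
      fix y :: complex assume y: "y \<in> UNIV" "y \<noteq> 0 \<and> dist y 0 < \<rho>"
      have "(g y - g 0) / (y - 0) - c = (g y - g 0 - y * c) / y"
        using y(2) by (simp add: field_simps)
      then have "norm ((g y - g 0) / (y - 0) - c) = cmod (g y - g 0 - y * c) / cmod y"
        by (simp add: norm_divide)
      also have "\<dots> \<le> K * (cmod y)^2 / cmod y"
        using y(2) by (intro divide_right_mono rem) auto
      also have "\<dots> = cmod y * K" using y(2) by (simp add: power2_eq_square)
      finally show "norm ((g y - g 0) / (y - 0) - c) \<le> cmod y * K" .
    qed
    have "((\<lambda>y::complex. cmod y) \<longlongrightarrow> 0) (at 0)"
      using tendsto_norm_zero[OF tendsto_ident_at[of 0 UNIV]] by simp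
    from tendsto_mult[OF this tendsto_const[of K]]
    show "((\<lambda>y::complex. cmod y * K) \<longlongrightarrow> 0) (at 0)" by simp
  qed
  then have "(g has_field_derivative c) (at 0)"
    unfolding has_field_derivative_iff by (rule LIM_zero_cancel)
  then show ?thesis by (rule DERIV_imp_deriv)
qed

text \<open>The linear Taylor coefficients of \<open>Z\<close> are the entries of the matrices \<open>B\<^sub>i\<close>: along the
  coordinate line \<open>t \<mapsto> t e\<^sub>(\<^sub>i\<^sub>,\<^sub>k\<^sub>)\<close>, \<open>Z\<close> equals \<open>t cZ(e\<^sub>(\<^sub>i\<^sub>,\<^sub>k\<^sub>)) + O(t\<^sup>2)\<close>.\<close>
lemma Bmat_eq:
  fixes \<rho> :: real and I :: "(nat \<times> 'd::finite) set" and Z :: "(nat \<times> 'd \<Rightarrow> complex) \<Rightarrow> complex^'d" and cZ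
  assumes finI: "finite I" and rho: "\<rho> > 0" and repZ: "is_Arep \<rho> I Z cZ" and Z0: "Z (\<lambda>_. 0) = 0"
    and ik: "(i,k) \<in> I"
  shows "Bmat Z i $ j $ k = cZ (unit_idx (i,k)) $ j"
proof -
  define wt where "wt t = (\<lambda>x. if x = (i,k) then t else (0::complex))" for t
  define S2 where "S2 = infsum (\<lambda>\<beta>. norm (cZ \<beta>) * \<rho> ^ mdeg I \<beta>) (deg_ge2 I)"
  have "cmod (Z (wt t) $ j - Z (wt 0) $ j - t * cZ (unit_idx (i,k)) $ j) \<le> S2 / \<rho>^2 * (cmod t)^2"
    if t: "cmod t \<le> \<rho>" for t
  proof -
    define R where "R = infsum (\<lambda>\<beta>. mon I (wt t) \<beta> *s cZ \<beta>) (deg_ge2 I)"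
    have wp: "wt t \<in> polydisc \<rho> I" using t rho by (auto simp: polydisc_def wt_def)
    have "Z (wt t) = (\<Sum>x\<in>I. wt t x *s cZ (unit_idx x)) + R"
      unfolding R_def by (rule Z_split[OF finI rho repZ Z0 wp])
    also have "(\<Sum>x\<in>I. wt t x *s cZ (unit_idx x)) = t *s cZ (unit_idx (i,k))"
      using finI ik by (simp add: wt_def if_distrib[of "\<lambda>s. s *s _"] sum.delta cong: if_cong)
    finally have "Z (wt t) $ j - Z (wt 0) $ j - t * cZ (unit_idx (i,k)) $ j = R $ j"
      using Z0 by (simp add: wt_def)
    moreover have "norm R \<le> (cmod t / \<rho>)^2 * S2"
      unfolding R_def S2_def
      by (rule Z_tail_bound[OF finI rho repZ Z0]) (use t in \<open>auto simp: wt_def\<close>)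
    ultimately show ?thesis
      using Finite_Cartesian_Product.norm_nth_le[of R j] by (simp add: power_divide field_simps)
  qed
  then have "deriv (\<lambda>t. Z (wt t) $ j) 0 = cZ (unit_idx (i,k)) $ j"
    by (rule deriv_of_quadratic_remainder[where K="S2 / \<rho>^2", OF rho])
  then show ?thesis unfolding Bmat_def wt_def by simp
qed

section \<open>Substituting power series into a power series\<close>

text \<open>To expand \<open>u(z)\<^sup>\<beta> = \<Prod>\<^sub>x u\<^sub>x(z)\<^sup>\<beta>\<^sup>x\<close> we list the factors as \<open>slots I \<beta>\<close> (each variable
  \<open>x\<close> repeated \<open>\<beta> x\<close> times); choosing one term of each factor is a function
  \<open>p \<in> slot_choices I \<beta>\<close>, and the resulting monomial has multi-index \<open>slot_sum I \<beta> p\<close>.\<close>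
definition slots :: "'i set \<Rightarrow> ('i \<Rightarrow> nat) \<Rightarrow> ('i \<times> nat) set" where
  "slots I \<beta> = Sigma I (\<lambda>x. {..<\<beta> x})"

definition slot_choices :: "'i set \<Rightarrow> ('i \<Rightarrow> nat) \<Rightarrow> (('i \<times> nat) \<Rightarrow> ('m::finite \<Rightarrow> nat)) set" where
  "slot_choices I \<beta> = PiE (slots I \<beta>) (\<lambda>_. UNIV)"

definition slot_sum :: "'i set \<Rightarrow> ('i \<Rightarrow> nat) \<Rightarrow> (('i \<times> nat) \<Rightarrow> ('m::finite \<Rightarrow> nat)) \<Rightarrow> ('m \<Rightarrow> nat)" where
  "slot_sum I \<beta> p = (\<lambda>i. \<Sum>t\<in>slots I \<beta>. p t i)"

lemma finite_slots: "finite I \<Longrightarrow> finite (slots I \<beta>)"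
  by (simp add: slots_def)

lemma card_slots: "finite I \<Longrightarrow> card (slots I \<beta>) = mdeg I \<beta>"
  by (simp add: slots_def card_SigmaI mdeg_def)

lemma slot_fst: "t \<in> slots I \<beta> \<Longrightarrow> fst t \<in> I"
  by (auto simp: slots_def)

lemma mon_slots: "finite I \<Longrightarrow> mon I w \<beta> = (\<Prod>t\<in>slots I \<beta>. w (fst t))"
proof -
  assume f: "finite I"
  have "mon I w \<beta> = (\<Prod>x\<in>I. \<Prod>r\<in>{..<\<beta> x}. w x)" unfolding mon_def by simp
  also have "\<dots> = (\<Prod>(x,r)\<in>slots I \<beta>. w x)" unfolding slots_def by (rule prod.Sigma) (use f in auto)
  finally show ?thesis by (simp add: case_prod_beta)
qed

lemma mon_slot_sum: "finite I \<Longrightarrow> mon UNIV z (slot_sum I \<beta> p) = (\<Prod>t\<in>slots I \<beta>. mon UNIV z (p t))"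
proof -
  assume f: "finite I"
  have "mon UNIV z (slot_sum I \<beta> p) = (\<Prod>i\<in>UNIV. \<Prod>t\<in>slots I \<beta>. z i ^ p t i)"
    unfolding mon_def slot_sum_def by (simp add: power_sum)
  also have "\<dots> = (\<Prod>t\<in>slots I \<beta>. \<Prod>i\<in>UNIV. z i ^ p t i)" by (rule prod.swap)
  finally show ?thesis by (simp add: mon_def)
qed

lemma prod_PiE_abs_summable:
  fixes f :: "'a \<Rightarrow> 'b \<Rightarrow> 'c::{real_normed_field,banach,second_countable_topology}"
  assumes "finite A" "\<And>x. x\<in>A \<Longrightarrow> countable (B x)" "\<And>x. x\<in>A \<Longrightarrow> (\<lambda>y. norm (f x y)) summable_on B x"
  shows "(\<lambda>g. norm (\<Prod>x\<in>A. f x (g x))) summable_on PiE A B"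
  using abs_summable_on_prod_PiE[of A B f] abs_summable_equivalent assms by metis

context
  fixes I :: "'i set" and B :: "('i \<Rightarrow> nat) set" and cZ :: "('i \<Rightarrow> nat) \<Rightarrow> complex^'d::finite"
    and a :: "'i \<Rightarrow> ('m::finite \<Rightarrow> nat) \<Rightarrow> complex" and u :: "'i \<Rightarrow> ('m \<Rightarrow> complex) \<Rightarrow> complex"
    and n :: real
  assumes finI: "finite I"
    and sa: "\<And>x. x\<in>I \<Longrightarrow> (\<lambda>\<alpha>. cmod (a x \<alpha>)) summable_on UNIV"
    and an: "\<And>x. x\<in>I \<Longrightarrow> infsum (\<lambda>\<alpha>. cmod (a x \<alpha>)) UNIV \<le> n"
    and ua: "\<And>x z. x\<in>I \<Longrightarrow> \<forall>i. cmod (z i) \<le> 1 \<Longrightarrow> ((\<lambda>\<alpha>. mon UNIV z \<alpha> * a x \<alpha>) has_sum u x z) UNIV"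
    and sc: "(\<lambda>\<beta>. norm (cZ \<beta>) * n ^ mdeg I \<beta>) summable_on B"
begin

lemma slot_prod_abs_summable:
  "(\<lambda>p. norm (\<Prod>t\<in>slots I \<beta>. a (fst t) (p t))) summable_on slot_choices I \<beta>"
  unfolding slot_choices_def
  by (rule prod_PiE_abs_summable) (auto simp: finite_slots[OF finI] sa slot_fst)

lemma slot_prod_abs_sum_le:
  "infsum (\<lambda>p. norm (\<Prod>t\<in>slots I \<beta>. a (fst t) (p t))) (slot_choices I \<beta>) \<le> n ^ mdeg I \<beta>"
proof -
  have "infsum (\<lambda>p. norm (\<Prod>t\<in>slots I \<beta>. a (fst t) (p t))) (slot_choices I \<beta>)
      = infsum (\<lambda>p. \<Prod>t\<in>slots I \<beta>. cmod (a (fst t) (p t))) (slot_choices I \<beta>)"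
    by (simp add: prod_norm)
  also have "\<dots> = (\<Prod>t\<in>slots I \<beta>. infsum (\<lambda>\<alpha>. cmod (a (fst t) \<alpha>)) UNIV)"
    unfolding slot_choices_def
    by (rule infsum_prod_PiE_abs) (auto simp: finite_slots[OF finI] sa slot_fst)
  also have "\<dots> \<le> (\<Prod>t\<in>slots I \<beta>. n)"
    by (rule prod_mono) (auto simp: infsum_nonneg an slot_fst)
  also have "\<dots> = n ^ mdeg I \<beta>" by (simp add: card_slots[OF finI])
  finally show ?thesis .
qed

lemma slot_prod_has_sum:
  assumes z: "\<forall>i. cmod (z i) \<le> 1"
  shows "((\<lambda>p. \<Prod>t\<in>slots I \<beta>. mon UNIV z (p t) * a (fst t) (p t)) has_sum mon I (\<lambda>x. u x z) \<beta>)
           (slot_choices I \<beta>)"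
proof -
  have s1: "(\<lambda>\<alpha>. norm (mon UNIV z \<alpha> * a x \<alpha>)) summable_on UNIV" if "x \<in> I" for x
  proof (rule summable_on_comparison_test[OF sa[OF that]])
    show "norm (mon UNIV z \<alpha> * a x \<alpha>) \<le> cmod (a x \<alpha>)" for \<alpha>
      using mon_bound[of UNIV z \<alpha>] z by (simp add: norm_mult mult_left_le_one_le)
  qed simp
  have "(\<lambda>p. norm (\<Prod>t\<in>slots I \<beta>. mon UNIV z (p t) * a (fst t) (p t))) summable_on slot_choices I \<beta>"
    unfolding slot_choices_def
    by (rule prod_PiE_abs_summable) (auto simp: finite_slots[OF finI] s1 slot_fst)
  then have sm: "(\<lambda>p. \<Prod>t\<in>slots I \<beta>. mon UNIV z (p t) * a (fst t) (p t)) summable_on slot_choices I \<beta>"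
    by (rule abs_summable_summable)
  have "infsum (\<lambda>p. \<Prod>t\<in>slots I \<beta>. mon UNIV z (p t) * a (fst t) (p t)) (slot_choices I \<beta>)
      = (\<Prod>t\<in>slots I \<beta>. infsum (\<lambda>\<alpha>. mon UNIV z \<alpha> * a (fst t) \<alpha>) UNIV)"
    unfolding slot_choices_def
    by (rule infsum_prod_PiE_abs) (auto simp: finite_slots[OF finI] s1 slot_fst)
  also have "\<dots> = (\<Prod>t\<in>slots I \<beta>. u (fst t) z)"
    by (rule prod.cong[OF refl], rule infsumI, rule ua[OF slot_fst z])
  also have "\<dots> = mon I (\<lambda>x. u x z) \<beta>" by (simp add: mon_slots[OF finI])
  finally show ?thesis using has_sum_infsum[OF sm] by simp
qed

definition comp_index :: "(('i \<Rightarrow> nat) \<times> (('i \<times> nat) \<Rightarrow> ('m \<Rightarrow> nat))) set" where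
  "comp_index = Sigma B (slot_choices I)"
definition comp_term :: "('i \<Rightarrow> nat) \<times> (('i \<times> nat) \<Rightarrow> ('m \<Rightarrow> nat)) \<Rightarrow> complex^'d" where
  "comp_term s = (\<Prod>t\<in>slots I (fst s). a (fst t) (snd s t)) *s cZ (fst s)"
definition comp_deg :: "('i \<Rightarrow> nat) \<times> (('i \<times> nat) \<Rightarrow> ('m \<Rightarrow> nat)) \<Rightarrow> ('m \<Rightarrow> nat)" where
  "comp_deg s = slot_sum I (fst s) (snd s)"
definition comp_fun :: "('m \<Rightarrow> complex) \<Rightarrow> complex^'d" where
  "comp_fun z = infsum (\<lambda>\<beta>. mon I (\<lambda>x. u x z) \<beta> *s cZ \<beta>) B"
definition comp_coeff :: "('m \<Rightarrow> nat) \<Rightarrow> complex^'d" where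
  "comp_coeff \<gamma> = infsum comp_term {s\<in>comp_index. comp_deg s = \<gamma>}"

lemma comp_term_inner_summable: "(\<lambda>p. norm (comp_term (\<beta>, p))) summable_on slot_choices I \<beta>"
  unfolding comp_term_def
  using summable_on_cmult_left[OF slot_prod_abs_summable, where c="norm (cZ \<beta>)"]
  by (simp add: norm_vsmult)

lemma comp_term_inner_le:
  "infsum (\<lambda>p. norm (comp_term (\<beta>, p))) (slot_choices I \<beta>) \<le> norm (cZ \<beta>) * n ^ mdeg I \<beta>"
proof -
  have "infsum (\<lambda>p. norm (comp_term (\<beta>, p))) (slot_choices I \<beta>)
      = infsum (\<lambda>p. norm (\<Prod>t\<in>slots I \<beta>. a (fst t) (p t))) (slot_choices I \<beta>) * norm (cZ \<beta>)"
    unfolding comp_term_def norm_vsmult fst_conv snd_conv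
    by (rule infsum_cmult_left) (use slot_prod_abs_summable in auto)
  also have "\<dots> \<le> n ^ mdeg I \<beta> * norm (cZ \<beta>)"
    by (rule mult_right_mono[OF slot_prod_abs_sum_le norm_ge_zero])
  finally show ?thesis by (simp add: mult.commute)
qed

lemma comp_term_outer_summable:
  "(\<lambda>\<beta>. infsum (\<lambda>p. norm (comp_term (\<beta>, p))) (slot_choices I \<beta>)) summable_on B"
  by (rule summable_on_comparison_test[OF sc]) (auto intro: comp_term_inner_le infsum_nonneg)

lemma comp_term_abs_summable: "(\<lambda>s. norm (comp_term s)) summable_on comp_index"
  unfolding comp_index_def Infinite_Sum.abs_summable_on_Sigma_iff
proof (intro conjI ballI)
  show "(\<lambda>p. norm (comp_term (\<beta>, p))) summable_on slot_choices I \<beta>" for \<beta>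
    by (rule comp_term_inner_summable)
  show "(\<lambda>\<beta>. norm (infsum (\<lambda>p. norm (comp_term (\<beta>, p))) (slot_choices I \<beta>))) summable_on B"
    using comp_term_outer_summable by (simp add: infsum_nonneg)
qed

lemma comp_term_abs_sum_le:
  "infsum (\<lambda>s. norm (comp_term s)) comp_index \<le> infsum (\<lambda>\<beta>. norm (cZ \<beta>) * n ^ mdeg I \<beta>) B"
proof -
  have "infsum (\<lambda>s. norm (comp_term s)) comp_index
      = infsum (\<lambda>\<beta>. infsum (\<lambda>p. norm (comp_term (\<beta>, p))) (slot_choices I \<beta>)) B"
    unfolding comp_index_def
    by (rule infsum_Sigma_banach[symmetric]) (use comp_term_abs_summable in \<open>simp add: comp_index_def\<close>)
  also have "\<dots> \<le> infsum (\<lambda>\<beta>. norm (cZ \<beta>) * n ^ mdeg I \<beta>) B"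
    by (rule infsum_mono[OF comp_term_outer_summable sc]) (rule comp_term_inner_le)
  finally show ?thesis .
qed

lemma comp_term_has_sum:
  assumes z: "\<forall>i. cmod (z i) \<le> 1"
  shows "((\<lambda>s. mon UNIV z (comp_deg s) *s comp_term s) has_sum comp_fun z) comp_index"
proof -
  have "(\<lambda>s. norm (mon UNIV z (comp_deg s) *s comp_term s)) summable_on comp_index"
  proof (rule summable_on_comparison_test[OF comp_term_abs_summable])
    show "norm (mon UNIV z (comp_deg s) *s comp_term s) \<le> norm (comp_term s)" for s
      using mon_bound[of UNIV z] z by (simp add: norm_vsmult mult_left_le_one_le)
  qed simp
  then have "(\<lambda>s. mon UNIV z (comp_deg s) *s comp_term s) summable_on comp_index"
    by (rule abs_summable_summable)
  then have hs: "((\<lambda>s. mon UNIV z (comp_deg s) *s comp_term s) has_sum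
      infsum (\<lambda>s. mon UNIV z (comp_deg s) *s comp_term s) comp_index) comp_index"
    by (rule has_sum_infsum)
  have tform: "mon UNIV z (comp_deg (\<beta>,p)) *s comp_term (\<beta>,p)
      = (\<Prod>t\<in>slots I \<beta>. mon UNIV z (p t) * a (fst t) (p t)) *s cZ \<beta>" for \<beta> p
    unfolding comp_deg_def comp_term_def
    by (simp add: mon_slot_sum[OF finI] prod.distrib vector_smult_assoc)
  have inner: "((\<lambda>p. mon UNIV z (comp_deg (\<beta>,p)) *s comp_term (\<beta>,p)) has_sum
      mon I (\<lambda>x. u x z) \<beta> *s cZ \<beta>) (slot_choices I \<beta>)" for \<beta>
    unfolding tform by (rule has_sum_bounded_linear[OF bounded_linear_smultv slot_prod_has_sum[OF z]])
  have "((\<lambda>\<beta>. mon I (\<lambda>x. u x z) \<beta> *s cZ \<beta>) has_sum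
      infsum (\<lambda>s. mon UNIV z (comp_deg s) *s comp_term s) comp_index) B"
    using hs unfolding comp_index_def by (rule has_sum_SigmaD) (rule inner)
  then have "comp_fun z = infsum (\<lambda>s. mon UNIV z (comp_deg s) *s comp_term s) comp_index"
    unfolding comp_fun_def by (rule infsumI)
  then show ?thesis using hs by simp
qed

lemma comp_regroup:
  "(f has_sum S) comp_index \<longleftrightarrow>
     ((\<lambda>(\<gamma>,s). f s) has_sum S) (Sigma UNIV (\<lambda>\<gamma>. {s\<in>comp_index. comp_deg s = \<gamma>}))"
  by (rule has_sum_reindex_bij_witness[where i=snd and j="\<lambda>s. (comp_deg s, s)"]) auto

lemma comp_fiber_abs_summable: "(\<lambda>s. norm (comp_term s)) summable_on {s\<in>comp_index. comp_deg s = \<gamma>}"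
  by (rule summable_on_subset[OF comp_term_abs_summable]) auto

lemma comp_fiber_abs_has_sum:
  "((\<lambda>\<gamma>. infsum (\<lambda>s. norm (comp_term s)) {s\<in>comp_index. comp_deg s = \<gamma>}) has_sum
     infsum (\<lambda>s. norm (comp_term s)) comp_index) UNIV"
proof -
  have "((\<lambda>s. norm (comp_term s)) has_sum infsum (\<lambda>s. norm (comp_term s)) comp_index) comp_index"
    using comp_term_abs_summable by (rule has_sum_infsum)
  then show ?thesis unfolding comp_regroup
    by (rule has_sum_SigmaD) (auto intro: has_sum_infsum comp_fiber_abs_summable)
qed

lemma comp_coeff_norm_le:
  "norm (comp_coeff \<gamma>) \<le> infsum (\<lambda>s. norm (comp_term s)) {s\<in>comp_index. comp_deg s = \<gamma>}"
  unfolding comp_coeff_def by (rule norm_infsum_bound[OF comp_fiber_abs_summable])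

lemma comp_coeff_Xrep: "is_Xrep comp_coeff comp_fun"
  unfolding is_Xrep_def
proof (intro conjI allI impI)
  show "(\<lambda>\<gamma>. norm (comp_coeff \<gamma>)) summable_on UNIV"
    by (rule summable_on_comparison_test[OF has_sum_imp_summable[OF comp_fiber_abs_has_sum]])
      (simp_all add: comp_coeff_norm_le)
next
  fix z :: "'m \<Rightarrow> complex" assume z: "\<forall>i. cmod (z i) \<le> 1"
  have "((\<lambda>(\<gamma>,s). mon UNIV z (comp_deg s) *s comp_term s) has_sum comp_fun z)
      (Sigma UNIV (\<lambda>\<gamma>. {s\<in>comp_index. comp_deg s = \<gamma>}))"
    using comp_term_has_sum[OF z] by (simp add: comp_regroup)
  moreover have "((\<lambda>(\<gamma>,s). mon UNIV z (comp_deg s) *s comp_term s) has_sum comp_fun z)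
        (Sigma UNIV (\<lambda>\<gamma>. {s\<in>comp_index. comp_deg s = \<gamma>}))
      \<longleftrightarrow> ((\<lambda>(\<gamma>,s). mon UNIV z \<gamma> *s comp_term s) has_sum comp_fun z)
        (Sigma UNIV (\<lambda>\<gamma>. {s\<in>comp_index. comp_deg s = \<gamma>}))"
    by (rule has_sum_cong) auto
  ultimately have h: "((\<lambda>(\<gamma>,s). mon UNIV z \<gamma> *s comp_term s) has_sum comp_fun z)
      (Sigma UNIV (\<lambda>\<gamma>. {s\<in>comp_index. comp_deg s = \<gamma>}))" by simp
  show "((\<lambda>\<gamma>. mon UNIV z \<gamma> *s comp_coeff \<gamma>) has_sum comp_fun z) UNIV"
  proof (rule has_sum_SigmaD[OF h])
    fix \<gamma>
    have "comp_term summable_on {s\<in>comp_index. comp_deg s = \<gamma>}"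
      by (rule abs_summable_summable[OF comp_fiber_abs_summable])
    from has_sum_vsmult[OF has_sum_infsum[OF this]]
    show "((\<lambda>s. case (\<gamma>, s) of (\<gamma>, s) \<Rightarrow> mon UNIV z \<gamma> *s comp_term s) has_sum
        mon UNIV z \<gamma> *s comp_coeff \<gamma>) {s\<in>comp_index. comp_deg s = \<gamma>}"
      unfolding comp_coeff_def by simp
  qed
qed

lemma comp_coeff_norm_sum_le:
  "infsum (\<lambda>\<gamma>. norm (comp_coeff \<gamma>)) UNIV \<le> infsum (\<lambda>\<beta>. norm (cZ \<beta>) * n ^ mdeg I \<beta>) B"
proof -
  have "infsum (\<lambda>\<gamma>. norm (comp_coeff \<gamma>)) UNIV
      \<le> infsum (\<lambda>\<gamma>. infsum (\<lambda>s. norm (comp_term s)) {s\<in>comp_index. comp_deg s = \<gamma>}) UNIV"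
  proof (rule infsum_mono[OF _ _ comp_coeff_norm_le])
    show "(\<lambda>\<gamma>. norm (comp_coeff \<gamma>)) summable_on UNIV"
      using comp_coeff_Xrep unfolding is_Xrep_def by blast
    show "(\<lambda>\<gamma>. infsum (\<lambda>s. norm (comp_term s)) {s\<in>comp_index. comp_deg s = \<gamma>}) summable_on UNIV"
      by (rule has_sum_imp_summable[OF comp_fiber_abs_has_sum])
  qed
  also have "\<dots> = infsum (\<lambda>s. norm (comp_term s)) comp_index"
    using comp_fiber_abs_has_sum by (rule infsumI)
  also have "\<dots> \<le> infsum (\<lambda>\<beta>. norm (cZ \<beta>) * n ^ mdeg I \<beta>) B" by (rule comp_term_abs_sum_le)
  finally show ?thesis .
qed

lemma composition_in_X:
  "\<exists>G. is_Xrep G (\<lambda>z. infsum (\<lambda>\<beta>. mon I (\<lambda>x. u x z) \<beta> *s cZ \<beta>) B) \<and>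
       infsum (\<lambda>\<gamma>. norm (G \<gamma>)) UNIV \<le> infsum (\<lambda>\<beta>. norm (cZ \<beta>) * n ^ mdeg I \<beta>) B"
  using comp_coeff_Xrep comp_coeff_norm_sum_le unfolding comp_fun_def[abs_def] by blast

end

section \<open>The linear operator \<open>D\<Phi>(0)\<close>\<close>

definition Lphi :: "nat \<Rightarrow> ('m::finite \<Rightarrow> complex) \<Rightarrow> ((nat \<times> 'd::finite \<Rightarrow> complex) \<Rightarrow> complex ^ 'd)
    \<Rightarrow> (('m \<Rightarrow> complex) \<Rightarrow> complex ^ 'd) \<Rightarrow> (('m \<Rightarrow> complex) \<Rightarrow> complex ^ 'd)" where
  "Lphi N lam Z h = (\<lambda>z. \<Sum>i\<le>N. Bmat Z i *v h (\<lambda>k. lam k ^ i * z k))"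

lemma Tmat_mv: "Tmat N Z \<mu> *v v = (\<Sum>i\<le>N. Bmat Z i *v (\<mu>^i *s v))"
  by (simp add: vec_eq_iff Tmat_def matrix_vector_mult_def sum_distrib_right sum_distrib_left
      algebra_simps sum.swap[of _ "{..N}"])

lemma Xrep_Lphi:
  assumes "\<forall>k. cmod (lam k) \<le> 1" and "is_Xrep c h"
  shows "is_Xrep (\<lambda>\<alpha>. Tmat N Z (lampow lam \<alpha>) *v c \<alpha>) (Lphi N lam Z h)"
proof -
  have "is_Xrep (\<lambda>\<alpha>. \<Sum>i\<le>N. Bmat Z i *v ((lampow lam \<alpha>)^i *s c \<alpha>))
      (\<lambda>z. \<Sum>i\<le>N. Bmat Z i *v h (\<lambda>k. lam k ^ i * z k))"
    by (rule Xrep_sum) (auto intro!: Xrep_matmul Xrep_scaled assms)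
  then show ?thesis unfolding Lphi_def by (simp add: Tmat_mv)
qed

lemma coefX_Lphi:
  "\<forall>k. cmod (lam k) \<le> 1 \<Longrightarrow> inX h \<Longrightarrow> coefX (Lphi N lam Z h) = (\<lambda>\<alpha>. Tmat N Z (lampow lam \<alpha>) *v coefX h \<alpha>)"
  by (rule Xrep_coefX[OF Xrep_Lphi[OF _ Xrep_coefX_of_inX]])

definition Bsum_norm :: "nat \<Rightarrow> ((nat \<times> 'd::finite \<Rightarrow> complex) \<Rightarrow> complex ^ 'd) \<Rightarrow> real" where
  "Bsum_norm N Z = (\<Sum>i\<le>N. entry_norm (Bmat Z i))"

lemma Bsum_norm_nonneg: "0 \<le> Bsum_norm N Z"
  unfolding Bsum_norm_def by (intro sum_nonneg entry_norm_nonneg)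

lemma Tmat_bound:
  assumes "cmod \<mu> \<le> 1"
  shows "norm (Tmat N Z \<mu> *v v) \<le> Bsum_norm N Z * norm v"
proof -
  have "norm (Tmat N Z \<mu> *v v) \<le> (\<Sum>i\<le>N. norm (Bmat Z i *v (\<mu>^i *s v)))"
    unfolding Tmat_mv by (rule norm_sum)
  also have "\<dots> \<le> (\<Sum>i\<le>N. entry_norm (Bmat Z i) * norm v)"
  proof (rule sum_mono)
    fix i
    have "norm (Bmat Z i *v (\<mu>^i *s v)) \<le> entry_norm (Bmat Z i) * norm (\<mu>^i *s v)" by (rule norm_mv_le)
    also have "\<dots> \<le> entry_norm (Bmat Z i) * norm v"
      using assms by (intro mult_left_mono entry_norm_nonneg)
        (simp add: norm_vsmult norm_power power_le_one mult_left_le_one_le)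
    finally show "norm (Bmat Z i *v (\<mu>^i *s v)) \<le> entry_norm (Bmat Z i) * norm v" .
  qed
  also have "\<dots> = Bsum_norm N Z * norm v" by (simp add: Bsum_norm_def sum_distrib_right)
  finally show ?thesis .
qed

lemma Lphi_bounded:
  fixes lam :: "'m::finite \<Rightarrow> complex" and Z :: "(nat \<times> 'd::finite \<Rightarrow> complex) \<Rightarrow> complex ^ 'd"
  assumes lam1: "\<forall>k. cmod (lam k) \<le> 1"
  shows "bounded_linX (Lphi N lam Z)"
  unfolding bounded_linX_def
proof (intro conjI allI impI exI)
  fix f :: "('m \<Rightarrow> complex) \<Rightarrow> complex^'d" assume "inX f"
  then show "inX (Lphi N lam Z f)" using Xrep_inX Xrep_Lphi[OF lam1 Xrep_coefX_of_inX] by blast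
next
  fix f g :: "('m \<Rightarrow> complex) \<Rightarrow> complex^'d"
  show "eqX (Lphi N lam Z (\<lambda>z. f z + g z)) (\<lambda>z. Lphi N lam Z f z + Lphi N lam Z g z)"
    unfolding Lphi_def eqX_def by (simp add: matrix_vector_right_distrib sum.distrib)
next
  fix c and f :: "('m \<Rightarrow> complex) \<Rightarrow> complex^'d"
  show "eqX (Lphi N lam Z (\<lambda>z. c *s f z)) (\<lambda>z. c *s Lphi N lam Z f z)"
    unfolding Lphi_def eqX_def by (simp add: vector_scalar_commute vsmult_sum)
next
  fix f :: "('m \<Rightarrow> complex) \<Rightarrow> complex^'d" assume f: "inX f"
  have fc: "is_Xrep (coefX f) f" by (rule Xrep_coefX_of_inX[OF f])
  have s1: "(\<lambda>\<alpha>. norm (coefX f \<alpha>)) summable_on UNIV" using fc unfolding is_Xrep_def by auto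
  have "normX (Lphi N lam Z f) \<le> infsum (\<lambda>\<alpha>. norm (Tmat N Z (lampow lam \<alpha>) *v coefX f \<alpha>)) UNIV"
    by (rule normX_le_sum_norm[OF Xrep_Lphi[OF lam1 fc]])
  also have "\<dots> \<le> infsum (\<lambda>\<alpha>. Bsum_norm N Z * norm (coefX f \<alpha>)) UNIV"
    using Xrep_Lphi[OF lam1 fc] s1
    by (intro infsum_mono)
      (auto simp: is_Xrep_def intro: summable_on_cmult_right Tmat_bound lampow_le1[OF lam1])
  also have "\<dots> = Bsum_norm N Z * infsum (\<lambda>\<alpha>. norm (coefX f \<alpha>)) UNIV"
    by (rule infsum_cmult_right) (use s1 in auto)
  also have "\<dots> \<le> Bsum_norm N Z * (real CARD('d) * normX f)"
    by (intro mult_left_mono Bsum_norm_nonneg sum_norm_le_normX[OF fc])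
  finally show "normX (Lphi N lam Z f) \<le> (Bsum_norm N Z * real CARD('d)) * normX f" by simp
qed

lemma Phi_zero: "Phi N lam Z (\<lambda>_. 0) z = Z (\<lambda>_. 0)"
proof -
  have "(\<lambda>p::nat \<times> 'a. if fst p \<le> N then (0::complex^'a::finite) $ snd p else 0) = (\<lambda>_. 0)"
    by (rule ext) (simp add: Finite_Cartesian_Product.zero_index)
  then show ?thesis by (simp add: Phi_def case_prod_unfold)
qed

context
  fixes \<rho> :: real and N :: nat and Z :: "(nat \<times> 'd::finite \<Rightarrow> complex) \<Rightarrow> complex^'d"
    and lam :: "'m::finite \<Rightarrow> complex" and cZ
  assumes rho: "\<rho> > 0" and repZ: "is_Arep \<rho> ({..N} \<times> UNIV) Z cZ" and Z0: "Z (\<lambda>_. 0) = 0"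
    and lam1: "\<forall>k. cmod (lam k) \<le> 1"
begin

abbreviation Zvars :: "(nat \<times> 'd) set" where
  "Zvars \<equiv> {..N} \<times> UNIV"

definition tail_weight :: real where
  "tail_weight = infsum (\<lambda>\<beta>. norm (cZ \<beta>) * \<rho> ^ mdeg Zvars \<beta>) (deg_ge2 Zvars)"

lemma tail_weight_nonneg: "0 \<le> tail_weight"
  unfolding tail_weight_def using rho by (intro infsum_nonneg mult_nonneg_nonneg) auto

lemma linear_part:
  "(\<Sum>x\<in>Zvars. (v (fst x) $ snd x) *s cZ (unit_idx x)) = (\<Sum>i\<le>N. Bmat Z i *v v i)"
proof -
  have B: "Bmat Z i $ j $ k = cZ (unit_idx (i,k)) $ j" if "i \<le> N" for i j k
    using that by (intro Bmat_eq[OF _ rho repZ Z0]) auto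
  have "(\<Sum>x\<in>Zvars. v (fst x) $ snd x * cZ (unit_idx x) $ j) = (\<Sum>i\<le>N. \<Sum>k\<in>UNIV. Bmat Z i $ j $ k * v i $ k)"
    for j by (simp add: sum.cartesian_product case_prod_beta B mult.commute)
  then show ?thesis by (simp add: vec_eq_iff matrix_vector_mult_def)
qed

lemma Phi_expansion:
  assumes hc: "is_Xrep c h" and small: "infsum (\<lambda>\<alpha>. norm (c \<alpha>)) UNIV \<le> \<rho>"
    and z: "\<forall>i. cmod (z i) \<le> 1"
  shows "Phi N lam Z h z - Phi N lam Z (\<lambda>_. 0) z - Lphi N lam Z h z
       = infsum (\<lambda>\<beta>. mon Zvars (\<lambda>x. h (\<lambda>k. lam k ^ fst x * z k) $ snd x) \<beta> *s cZ \<beta>) (deg_ge2 Zvars)"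
proof -
  define u where "u x = h (\<lambda>k. lam k ^ fst x * z k) $ snd x" for x :: "nat \<times> 'd"
  define w where "w = (\<lambda>(i, j). if i \<le> N then h (\<lambda>k. lam k ^ i * z k) $ j else 0)"
  have wx: "w x = u x" if "x \<in> Zvars" for x using that by (auto simp: w_def u_def)
  have wp: "w \<in> polydisc \<rho> Zvars"
    unfolding polydisc_def
  proof (intro CollectI ballI)
    fix x assume x: "x \<in> Zvars"
    have "\<forall>k. cmod (lam k ^ fst x * z k) \<le> 1"
      unfolding norm_mult norm_power using lam1 z by (simp add: mult_le_one power_le_one)
    then have "norm (h (\<lambda>k. lam k ^ fst x * z k)) \<le> \<rho>"
      using Xrep_value_bound[OF hc] small by (meson order_trans)
    then show "cmod (w x) \<le> \<rho>"
      using wx[OF x] Finite_Cartesian_Product.norm_nth_le unfolding u_def by (metis order_trans)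
  qed
  have "Phi N lam Z h z = Z w" by (simp add: Phi_def w_def)
  also have "\<dots> = (\<Sum>x\<in>Zvars. w x *s cZ (unit_idx x)) + infsum (\<lambda>\<beta>. mon Zvars w \<beta> *s cZ \<beta>) (deg_ge2 Zvars)"
    by (rule Z_split[OF _ rho repZ Z0 wp]) simp
  also have "(\<Sum>x\<in>Zvars. w x *s cZ (unit_idx x)) = Lphi N lam Z h z"
    unfolding Lphi_def using linear_part[of "\<lambda>i. h (\<lambda>k. lam k ^ i * z k)"]
    by (simp add: wx u_def cong: sum.cong)
  also have "mon Zvars w = mon Zvars u" unfolding mon_def by (intro ext prod.cong) (auto simp: wx)
  finally show ?thesis by (simp add: Phi_zero Z0 u_def[abs_def])
qed

lemma Phi_remainder:
  assumes h: "inX h" and nsmall: "real CARD('d) * normX h \<le> \<rho>"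
  shows "\<exists>G. is_Xrep G (\<lambda>z. Phi N lam Z h z - Phi N lam Z (\<lambda>_. 0) z - Lphi N lam Z h z) \<and>
             infsum (\<lambda>\<gamma>. norm (G \<gamma>)) UNIV \<le> (real CARD('d) * normX h / \<rho>)^2 * tail_weight"
proof -
  define c where "c = coefX h"
  have hc: "is_Xrep c h" unfolding c_def by (rule Xrep_coefX_of_inX[OF h])
  define n where "n = real CARD('d) * normX h"
  have n0: "0 \<le> n" unfolding n_def using Xrep_normX_nonneg[OF hc] by simp
  have nr: "n \<le> \<rho>" unfolding n_def by (rule nsmall)
  have nh: "infsum (\<lambda>\<alpha>. norm (c \<alpha>)) UNIV \<le> n" unfolding n_def by (rule sum_norm_le_normX[OF hc])
  have sc0: "(\<lambda>\<alpha>. norm (c \<alpha>)) summable_on UNIV" using hc unfolding is_Xrep_def by auto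
  define a where "a x \<alpha> = lampow lam \<alpha> ^ fst x * c \<alpha> $ snd x" for x :: "nat \<times> 'd" and \<alpha>
  define u where "u x z = h (\<lambda>k. lam k ^ fst x * z k) $ snd x" for x :: "nat \<times> 'd" and z
  have ab: "cmod (a x \<alpha>) \<le> norm (c \<alpha>)" for x \<alpha>
  proof -
    have "cmod (lampow lam \<alpha>) ^ fst x \<le> 1" using lampow_le1[OF lam1] by (simp add: power_le_one)
    moreover have "cmod (c \<alpha> $ snd x) \<le> norm (c \<alpha>)" by (rule Finite_Cartesian_Product.norm_nth_le)
    ultimately have "cmod (lampow lam \<alpha>) ^ fst x * cmod (c \<alpha> $ snd x) \<le> 1 * norm (c \<alpha>)"
      by (intro mult_mono) auto
    then show ?thesis unfolding a_def norm_mult norm_power by simp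
  qed
  have sa: "(\<lambda>\<alpha>. cmod (a x \<alpha>)) summable_on UNIV" for x
    by (rule summable_on_comparison_test[OF sc0]) (auto simp: ab)
  have an: "infsum (\<lambda>\<alpha>. cmod (a x \<alpha>)) UNIV \<le> n" for x
    using infsum_mono[OF sa sc0 ab, of x] nh by simp
  have ua: "((\<lambda>\<alpha>. mon UNIV z \<alpha> * a x \<alpha>) has_sum u x z) UNIV" if z: "\<forall>i. cmod (z i) \<le> 1" for x z
  proof -
    have "((\<lambda>\<alpha>. mon UNIV z \<alpha> *s ((lampow lam \<alpha>)^(fst x) *s c \<alpha>)) has_sum h (\<lambda>k. lam k ^ fst x * z k)) UNIV"
      using Xrep_scaled[OF lam1 hc, of "fst x"] z unfolding is_Xrep_def by auto
    from has_sum_nth[OF this, of "snd x"] show ?thesis by (simp add: a_def u_def mult.assoc)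
  qed
  obtain G where G: "is_Xrep G (\<lambda>z. infsum (\<lambda>\<beta>. mon Zvars (\<lambda>x. u x z) \<beta> *s cZ \<beta>) (deg_ge2 Zvars))"
      and Gb: "infsum (\<lambda>\<gamma>. norm (G \<gamma>)) UNIV \<le> infsum (\<lambda>\<beta>. norm (cZ \<beta>) * n ^ mdeg Zvars \<beta>) (deg_ge2 Zvars)"
    using composition_in_X[where I=Zvars and B="deg_ge2 Zvars" and cZ=cZ and a=a and u=u and n=n] sa an ua
      cZ_tail_summable_r[OF _ rho repZ Z0 n0 nr] by auto
  have "eqX (\<lambda>z. infsum (\<lambda>\<beta>. mon Zvars (\<lambda>x. u x z) \<beta> *s cZ \<beta>) (deg_ge2 Zvars))
            (\<lambda>z. Phi N lam Z h z - Phi N lam Z (\<lambda>_. 0) z - Lphi N lam Z h z)"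
    unfolding eqX_def polydisc_def u_def using Phi_expansion[OF hc order_trans[OF nh nr]] by simp
  moreover have "infsum (\<lambda>\<beta>. norm (cZ \<beta>) * n ^ mdeg Zvars \<beta>) (deg_ge2 Zvars) \<le> (n/\<rho>)^2 * tail_weight"
    unfolding tail_weight_def by (rule cZ_tail_weight_le[OF _ rho repZ Z0 n0 nr]) simp
  ultimately show ?thesis using G Gb eqX_Xrep unfolding n_def by fastforce
qed

lemma Lphi_DPhi0: "is_DPhi0 (Phi N lam Z) (Lphi N lam Z)"
  unfolding is_DPhi0_def
proof (intro conjI Lphi_bounded[OF lam1] allI impI)
  fix \<epsilon> :: real assume e: "\<epsilon> > 0"
  define C where "C = real CARD('d)"
  have C1: "C \<ge> 1" unfolding C_def by simp
  define K2 where "K2 = C^2 * tail_weight / \<rho>^2"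
  have K2: "0 \<le> K2" unfolding K2_def using tail_weight_nonneg by simp
  define \<delta> where "\<delta> = min (\<rho> / C) (\<epsilon> / (K2 + 1))"
  have dpos: "\<delta> > 0" unfolding \<delta>_def using rho C1 e K2 by simp
  show "\<exists>\<delta>>0. \<forall>h. inX h \<and> normX h < \<delta> \<longrightarrow>
          normX (\<lambda>z. Phi N lam Z h z - Phi N lam Z (\<lambda>_. 0) z - Lphi N lam Z h z) \<le> \<epsilon> * normX h"
  proof (intro exI[of _ \<delta>] conjI dpos allI impI)
    fix h :: "('m \<Rightarrow> complex) \<Rightarrow> complex^'d" assume hh: "inX h \<and> normX h < \<delta>"
    have h0: "0 \<le> normX h" using normX_nonneg hh by blast
    have "normX h < \<rho> / C" using hh unfolding \<delta>_def by simp
    then have small: "C * normX h \<le> \<rho>" using C1 by (simp add: field_simps)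
    obtain G where G: "is_Xrep G (\<lambda>z. Phi N lam Z h z - Phi N lam Z (\<lambda>_. 0) z - Lphi N lam Z h z)"
        and Gb: "infsum (\<lambda>\<gamma>. norm (G \<gamma>)) UNIV \<le> (C * normX h / \<rho>)^2 * tail_weight"
      using Phi_remainder[of h] hh small unfolding C_def by blast
    have "normX (\<lambda>z. Phi N lam Z h z - Phi N lam Z (\<lambda>_. 0) z - Lphi N lam Z h z)
        \<le> (C * normX h / \<rho>)^2 * tail_weight"
      using normX_le_sum_norm[OF G] Gb by simp
    also have "\<dots> = (K2 * normX h) * normX h"
      unfolding K2_def using rho by (simp add: power2_eq_square field_simps)
    also have "\<dots> \<le> \<epsilon> * normX h"
    proof (rule mult_right_mono[OF _ h0])
      have "normX h \<le> \<epsilon> / (K2 + 1)" using hh unfolding \<delta>_def by simp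
      then have "K2 * normX h \<le> K2 * (\<epsilon> / (K2 + 1))" using K2 by (rule mult_left_mono)
      also have "\<dots> \<le> \<epsilon>" using K2 e by (simp add: field_simps)
      finally show "K2 * normX h \<le> \<epsilon>" .
    qed
    finally show "normX (\<lambda>z. Phi N lam Z h z - Phi N lam Z (\<lambda>_. 0) z - Lphi N lam Z h z) \<le> \<epsilon> * normX h" .
  qed
qed

lemma Phi_inX:
  assumes "inX h" "real CARD('d) * normX h \<le> \<rho>"
  shows "inX (Phi N lam Z h)"
proof -
  obtain G where G: "is_Xrep G (\<lambda>z. Phi N lam Z h z - Phi N lam Z (\<lambda>_. 0) z - Lphi N lam Z h z)"
    using Phi_remainder[OF assms] by blast
  have "(\<lambda>z. (Phi N lam Z h z - Phi N lam Z (\<lambda>_. 0) z - Lphi N lam Z h z) + Lphi N lam Z h z) = Phi N lam Z h"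
    by (simp add: fun_eq_iff Phi_zero Z0)
  then have "is_Xrep (\<lambda>\<alpha>. G \<alpha> + Tmat N Z (lampow lam \<alpha>) *v coefX h \<alpha>) (Phi N lam Z h)"
    using Xrep_add[OF G Xrep_Lphi[OF lam1 Xrep_coefX_of_inX[OF assms(1)], where N=N and Z=Z]] by simp
  then show ?thesis by (rule Xrep_inX)
qed

end

section \<open>A uniform bound for \<open>T(\<lambda>\<^sup>\<alpha>)\<^sup>-\<^sup>1\<close>\<close>

lemma Tmat_zero: "Tmat N Z 0 = Bmat Z 0"
  by (simp add: Tmat_def vec_eq_iff power_0_left if_distrib[of "\<lambda>x. x * _"] sum.delta cong: if_cong)

lemma Tmat_diff_bound:
  assumes "cmod \<mu> \<le> 1"
  shows "norm (Tmat N Z \<mu> *v y - Bmat Z 0 *v y) \<le> cmod \<mu> * Bsum_norm N Z * norm y"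
proof -
  have "Tmat N Z \<mu> *v y - Bmat Z 0 *v y = Tmat N Z \<mu> *v y - Tmat N Z 0 *v y"
    by (simp add: Tmat_zero)
  also have "\<dots> = (\<Sum>i\<le>N. Bmat Z i *v ((\<mu>^i - 0^i) *s y))"
    by (simp add: Tmat_mv sum_subtractf[symmetric] matrix_vector_mult_diff_distrib[symmetric]
        vector_sub_rdistrib)
  also have "norm \<dots> \<le> (\<Sum>i\<le>N. norm (Bmat Z i *v ((\<mu>^i - 0^i) *s y)))" by (rule norm_sum)
  also have "\<dots> \<le> (\<Sum>i\<le>N. entry_norm (Bmat Z i) * (cmod \<mu> * norm y))"
  proof (rule sum_mono)
    fix i
    have c: "cmod (\<mu>^i - 0^i) \<le> cmod \<mu>"
    proof (cases i)
      case (Suc j)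
      then have "cmod (\<mu>^i - 0^i) = cmod \<mu> * cmod \<mu> ^ j" by (simp add: norm_mult norm_power)
      also have "\<dots> \<le> cmod \<mu> * 1" using assms by (intro mult_left_mono power_le_one) auto
      finally show ?thesis by simp
    qed simp
    have "norm (Bmat Z i *v ((\<mu>^i - 0^i) *s y)) \<le> entry_norm (Bmat Z i) * norm ((\<mu>^i - 0^i) *s y)"
      by (rule norm_mv_le)
    also have "\<dots> \<le> entry_norm (Bmat Z i) * (cmod \<mu> * norm y)"
      unfolding norm_vsmult by (intro mult_left_mono entry_norm_nonneg mult_right_mono[OF c]) simp
    finally show "norm (Bmat Z i *v ((\<mu>^i - 0^i) *s y)) \<le> entry_norm (Bmat Z i) * (cmod \<mu> * norm y)" .
  qed
  also have "\<dots> = cmod \<mu> * Bsum_norm N Z * norm y"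
    by (simp add: Bsum_norm_def sum_distrib_left sum_distrib_right mult_ac)
  finally show ?thesis .
qed

lemma Tmat_inv_bound_small:
  assumes B0: "det (Bmat Z 0) \<noteq> 0" and dT: "det (Tmat N Z \<mu>) \<noteq> 0"
    and mu: "cmod \<mu> \<le> 1" "cmod \<mu> * (entry_norm (matrix_inv (Bmat Z 0)) * Bsum_norm N Z) \<le> 1/2"
  shows "norm (matrix_inv (Tmat N Z \<mu>) *v v) \<le> 2 * entry_norm (matrix_inv (Bmat Z 0)) * norm v"
proof -
  define y where "y = matrix_inv (Tmat N Z \<mu>) *v v"
  define Bi where "Bi = matrix_inv (Bmat Z 0)"
  have "Tmat N Z \<mu> *v y = v" unfolding y_def by (rule matrix_inv_right[OF dT])
  then have "y = Bi *v v - Bi *v (Tmat N Z \<mu> *v y - Bmat Z 0 *v y)"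
    using matrix_inv_left[OF B0, of y] unfolding Bi_def by (simp add: matrix_vector_mult_diff_distrib)
  then have "norm y \<le> norm (Bi *v v) + norm (Bi *v (Tmat N Z \<mu> *v y - Bmat Z 0 *v y))"
    by (metis norm_triangle_ineq4)
  also have "\<dots> \<le> entry_norm Bi * norm v + entry_norm Bi * (cmod \<mu> * Bsum_norm N Z * norm y)"
    by (intro add_mono norm_mv_le order_trans[OF norm_mv_le] mult_left_mono entry_norm_nonneg
        Tmat_diff_bound mu(1))
  also have "entry_norm Bi * (cmod \<mu> * Bsum_norm N Z * norm y)
      = (cmod \<mu> * (entry_norm Bi * Bsum_norm N Z)) * norm y" by simp
  also have "\<dots> \<le> 1/2 * norm y" using mu(2) unfolding Bi_def by (intro mult_right_mono) auto
  finally show ?thesis unfolding y_def Bi_def by simp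
qed

lemma lampow_eventually_small:
  fixes lam :: "'m::finite \<Rightarrow> complex"
  assumes lam: "\<forall>k. cmod (lam k) < 1" and e: "0 < e"
  shows "\<exists>K. \<forall>\<alpha>. K \<le> mdeg UNIV \<alpha> \<longrightarrow> cmod (lampow lam \<alpha>) \<le> e"
proof -
  define r where "r = Max (range (\<lambda>k. cmod (lam k)))"
  have r1: "r < 1" unfolding r_def using lam by (subst Max_less_iff) auto
  have r0: "0 \<le> r" unfolding r_def by (rule order_trans[OF norm_ge_zero Max_ge]) auto
  have rl: "\<forall>k. cmod (lam k) \<le> r" unfolding r_def by (auto intro: Max_ge)
  obtain K where K: "r ^ K < e" using real_arch_pow_inv[OF e r1] by blast
  have "cmod (lampow lam \<alpha>) \<le> e" if "K \<le> mdeg UNIV \<alpha>" for \<alpha>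
  proof -
    have "cmod (lampow lam \<alpha>) \<le> r ^ mdeg UNIV \<alpha>" by (rule lampow_bound[OF rl r0])
    also have "\<dots> \<le> r ^ K" using r0 r1 that by (intro power_decreasing) auto
    finally show ?thesis using K by simp
  qed
  then show ?thesis by blast
qed

text \<open>Non-resonance gives invertibility of each \<open>T(\<lambda>\<^sup>\<alpha>)\<close>, \<open>|\<alpha>| \<ge> 2\<close>; stability and the
  invertibility of \<open>B\<^sub>0\<close> make the inverses uniformly bounded, since all but finitely many
  \<open>\<lambda>\<^sup>\<alpha>\<close> are small.\<close>
lemma Tmat_inv_uniform_bound:
  fixes lam :: "'m::finite \<Rightarrow> complex" and Z :: "(nat \<times> 'd::finite \<Rightarrow> complex) \<Rightarrow> complex^'d"
  assumes lam: "\<forall>k. cmod (lam k) < 1" and B0: "det (Bmat Z 0) \<noteq> 0"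
    and dT: "\<And>\<alpha>. 2 \<le> mdeg UNIV \<alpha> \<Longrightarrow> det (Tmat N Z (lampow lam \<alpha>)) \<noteq> 0"
  shows "\<exists>C\<ge>0. \<forall>\<alpha> v. 2 \<le> mdeg UNIV \<alpha> \<longrightarrow> norm (matrix_inv (Tmat N Z (lampow lam \<alpha>)) *v v) \<le> C * norm v"
proof -
  define Bi where "Bi = matrix_inv (Bmat Z 0)"
  define K0 where "K0 = entry_norm Bi * Bsum_norm N Z"
  have K0: "0 \<le> K0" unfolding K0_def by (intro mult_nonneg_nonneg entry_norm_nonneg Bsum_norm_nonneg)
  obtain K where K: "\<And>\<alpha>. K \<le> mdeg UNIV \<alpha> \<Longrightarrow> cmod (lampow lam \<alpha>) \<le> 1 / (2 * (K0 + 1))"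
    using lampow_eventually_small[OF lam, of "1 / (2 * (K0 + 1))"] K0 by auto
  define A where "A = {\<alpha>::'m \<Rightarrow> nat. mdeg UNIV \<alpha> < K}"
  define C where "C = 2 * entry_norm Bi + (\<Sum>\<alpha>\<in>A. entry_norm (matrix_inv (Tmat N Z (lampow lam \<alpha>))))"
  have sum0: "0 \<le> (\<Sum>\<alpha>\<in>A. entry_norm (matrix_inv (Tmat N Z (lampow lam \<alpha>))))"
    by (intro sum_nonneg entry_norm_nonneg)
  have C0: "0 \<le> C" unfolding C_def using sum0 entry_norm_nonneg[of Bi] by simp
  have "norm (matrix_inv (Tmat N Z (lampow lam \<alpha>)) *v v) \<le> C * norm v" if a2: "2 \<le> mdeg UNIV \<alpha>" for \<alpha> v
  proof (cases "\<alpha> \<in> A")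
    case True
    have "entry_norm (matrix_inv (Tmat N Z (lampow lam \<alpha>)))
        \<le> (\<Sum>\<alpha>\<in>A. entry_norm (matrix_inv (Tmat N Z (lampow lam \<alpha>))))"
      by (rule member_le_sum[OF True]) (simp_all add: entry_norm_nonneg A_def finite_mdeg_less)
    then have "entry_norm (matrix_inv (Tmat N Z (lampow lam \<alpha>))) \<le> C"
      unfolding C_def using entry_norm_nonneg[of Bi] by linarith
    then show ?thesis by (rule order_trans[OF norm_mv_le mult_right_mono]) simp
  next
    case False
    then have sm: "cmod (lampow lam \<alpha>) \<le> 1 / (2 * (K0 + 1))" by (intro K) (simp add: A_def)
    have "cmod (lampow lam \<alpha>) * K0 \<le> 1 / (2 * (K0 + 1)) * K0" by (rule mult_right_mono[OF sm K0])
    also have "\<dots> \<le> 1/2" using K0 by (simp add: field_simps)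
    finally have "norm (matrix_inv (Tmat N Z (lampow lam \<alpha>)) *v v) \<le> 2 * entry_norm Bi * norm v"
      unfolding Bi_def K0_def
      using Tmat_inv_bound_small[OF B0 dT[OF a2]] lampow_le1[of lam] lam by (simp add: less_imp_le)
    also have "\<dots> \<le> C * norm v" unfolding C_def using sum0 by (intro mult_right_mono) auto
    finally show ?thesis .
  qed
  then show ?thesis using C0 by blast
qed

definition diag_op :: "(('m::finite \<Rightarrow> nat) \<Rightarrow> complex^'d::finite^'d)
    \<Rightarrow> (('m \<Rightarrow> complex) \<Rightarrow> complex ^ 'd) \<Rightarrow> (('m \<Rightarrow> complex) \<Rightarrow> complex ^ 'd)" where
  "diag_op M \<phi> = (\<lambda>z. infsum (\<lambda>\<alpha>. mon UNIV z \<alpha> *s (M \<alpha> *v coefX \<phi> \<alpha>)) UNIV)"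

lemma diag_op_Xrep:
  fixes M :: "('m::finite \<Rightarrow> nat) \<Rightarrow> complex^'d::finite^'d"
  assumes C0: "0 \<le> C" and MC: "\<And>\<alpha> v. norm (M \<alpha> *v v) \<le> C * norm v" and \<phi>: "inX \<phi>"
  shows "is_Xrep (\<lambda>\<alpha>. M \<alpha> *v coefX \<phi> \<alpha>) (diag_op M \<phi>)"
    and "normX (diag_op M \<phi>) \<le> C * real CARD('d) * normX \<phi>"
proof -
  have pc: "is_Xrep (coefX \<phi>) \<phi>" by (rule Xrep_coefX_of_inX[OF \<phi>])
  have s1: "(\<lambda>\<alpha>. norm (coefX \<phi> \<alpha>)) summable_on UNIV" using pc unfolding is_Xrep_def by auto
  have s2: "(\<lambda>\<alpha>. norm (M \<alpha> *v coefX \<phi> \<alpha>)) summable_on UNIV"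
    by (rule summable_on_comparison_test[OF summable_on_cmult_right[OF s1, where c=C]]) (auto simp: MC)
  show xr: "is_Xrep (\<lambda>\<alpha>. M \<alpha> *v coefX \<phi> \<alpha>) (diag_op M \<phi>)"
    unfolding diag_op_def by (rule Xrep_of_summable[OF s2])
  have "normX (diag_op M \<phi>) \<le> infsum (\<lambda>\<alpha>. norm (M \<alpha> *v coefX \<phi> \<alpha>)) UNIV"
    by (rule normX_le_sum_norm[OF xr])
  also have "\<dots> \<le> infsum (\<lambda>\<alpha>. C * norm (coefX \<phi> \<alpha>)) UNIV"
    by (rule infsum_mono[OF s2 summable_on_cmult_right[OF s1, where c=C] MC])
  also have "\<dots> = C * infsum (\<lambda>\<alpha>. norm (coefX \<phi> \<alpha>)) UNIV"
    by (rule infsum_cmult_right) (use s1 in auto)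
  also have "\<dots> \<le> C * (real CARD('d) * normX \<phi>)"
    by (rule mult_left_mono[OF sum_norm_le_normX[OF pc] C0])
  finally show "normX (diag_op M \<phi>) \<le> C * real CARD('d) * normX \<phi>" by simp
qed

section \<open>Inverting \<open>D\<Phi>(0)\<close> on \<open>H\<close>\<close>

definition Tinv :: "nat \<Rightarrow> ((nat \<times> 'd::finite \<Rightarrow> complex) \<Rightarrow> complex ^ 'd) \<Rightarrow> ('m::finite \<Rightarrow> complex)
    \<Rightarrow> ('m \<Rightarrow> nat) \<Rightarrow> complex^'d^'d" where
  "Tinv N Z lam \<alpha> = (if 2 \<le> mdeg UNIV \<alpha> then matrix_inv (Tmat N Z (lampow lam \<alpha>)) else 0)"

context
  fixes \<rho> :: real and N :: nat and Z :: "(nat \<times> 'd::finite \<Rightarrow> complex) \<Rightarrow> complex ^ 'd"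
    and lam :: "'m::finite \<Rightarrow> complex" and cZ
  assumes rho: "\<rho> > 0" and repZ: "is_Arep \<rho> ({..N} \<times> UNIV) Z cZ" and Z0: "Z (\<lambda>_. 0) = 0"
    and snr: "stable_nonresonant N Z lam" and B0: "det (Bmat Z 0) \<noteq> 0"
begin

lemma lam_lt1: "\<forall>k. cmod (lam k) < 1"
  using snr unfolding stable_nonresonant_def by blast

lemma lam_le1: "\<forall>k. cmod (lam k) \<le> 1"
  using lam_lt1 by (simp add: less_imp_le)

lemma Tmat_invertible: "2 \<le> mdeg UNIV \<alpha> \<Longrightarrow> det (Tmat N Z (lampow lam \<alpha>)) \<noteq> 0"
  using snr unfolding stable_nonresonant_def charF_def by blast

text \<open>Any derivative of \<open>\<Phi>\<close> at \<open>0\<close> coincides with \<open>Lphi\<close>, hence acts on coefficients by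
  \<open>T(\<lambda>\<^sup>\<alpha>)\<close>.\<close>
lemma coefX_DPhi0:
  assumes L: "is_DPhi0 (Phi N lam Z) L" and P: "inX P"
  shows "coefX (L P) = (\<lambda>\<alpha>. Tmat N Z (lampow lam \<alpha>) *v coefX P \<alpha>)"
proof -
  note Phi_inX = Phi_inX[OF rho repZ Z0 lam_le1]
  have "inX (Phi N lam Z (\<lambda>_. 0))"
    by (rule Phi_inX) (simp_all add: Xrep_inX[OF Xrep_zero] normX_zero less_imp_le[OF rho])
  moreover have "\<exists>\<delta>>0. \<forall>h. inX h \<and> normX h < \<delta> \<longrightarrow> inX (Phi N lam Z h)"
    using rho by (intro exI[of _ "\<rho> / real CARD('d)"]) (auto intro!: Phi_inX simp: field_simps)
  ultimately have "eqX (L P) (Lphi N lam Z P)"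
    by (rule derivatives_agree[OF L Lphi_DPhi0[OF rho repZ Z0 lam_le1] _ _ P])
  then show ?thesis using coefX_Lphi[OF lam_le1 P] eqX_coefX by metis
qed

lemma DPhi0_maps_H:
  assumes L: "is_DPhi0 (Phi N lam Z) L" and P: "inH P"
  shows "inH (L P)"
proof -
  have PX: "inX P" using P by (simp add: inH_def)
  have "inX (L P)" by (rule bounded_linX_inX[OF DPhi0_bounded_linX[OF L] PX])
  then show ?thesis using P by (simp add: inH_def coefX_DPhi0[OF L PX])
qed

lemma Tinv_uniform_bound: "\<exists>C\<ge>0. \<forall>\<alpha> v. norm (Tinv N Z lam \<alpha> *v v) \<le> C * norm v"
proof -
  obtain C where "C \<ge> 0" and C: "\<forall>\<alpha> v. 2 \<le> mdeg UNIV \<alpha> \<longrightarrow>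
      norm (matrix_inv (Tmat N Z (lampow lam \<alpha>)) *v v) \<le> C * norm v"
    using Tmat_inv_uniform_bound[OF lam_lt1 B0 Tmat_invertible] by blast
  then show ?thesis by (intro exI[of _ C]) (simp add: Tinv_def)
qed

lemma Tinv_cancel_H:
  assumes "inH \<phi>"
  shows "Tmat N Z (lampow lam \<alpha>) *v (Tinv N Z lam \<alpha> *v coefX \<phi> \<alpha>) = coefX \<phi> \<alpha>"
    and "Tinv N Z lam \<alpha> *v (Tmat N Z (lampow lam \<alpha>) *v coefX \<phi> \<alpha>) = coefX \<phi> \<alpha>"
proof -
  have "Tmat N Z (lampow lam \<alpha>) *v (Tinv N Z lam \<alpha> *v coefX \<phi> \<alpha>) = coefX \<phi> \<alpha> \<and>
      Tinv N Z lam \<alpha> *v (Tmat N Z (lampow lam \<alpha>) *v coefX \<phi> \<alpha>) = coefX \<phi> \<alpha>"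
  proof (cases "2 \<le> mdeg UNIV \<alpha>")
    case True
    then show ?thesis using matrix_inv_cancel[OF Tmat_invertible[OF True]] by (simp add: Tinv_def)
  next
    case False
    then show ?thesis using assms by (simp add: inH_def Tinv_def)
  qed
  then show "Tmat N Z (lampow lam \<alpha>) *v (Tinv N Z lam \<alpha> *v coefX \<phi> \<alpha>) = coefX \<phi> \<alpha>"
    and "Tinv N Z lam \<alpha> *v (Tmat N Z (lampow lam \<alpha>) *v coefX \<phi> \<alpha>) = coefX \<phi> \<alpha>" by simp_all
qed

lemma Tinv_op_Xrep:
  assumes "inX \<phi>"
  shows "is_Xrep (\<lambda>\<alpha>. Tinv N Z lam \<alpha> *v coefX \<phi> \<alpha>) (diag_op (Tinv N Z lam) \<phi>)"
proof -
  obtain C where C0: "C \<ge> 0" and C: "\<And>\<alpha> v. norm (Tinv N Z lam \<alpha> *v v) \<le> C * norm v"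
    using Tinv_uniform_bound by blast
  show ?thesis by (rule diag_op_Xrep(1)[where M="Tinv N Z lam", OF C0 C assms])
qed

lemma Tinv_op_bounded: "\<exists>C. \<forall>\<phi>. inH \<phi> \<longrightarrow> normX (diag_op (Tinv N Z lam) \<phi>) \<le> C * normX \<phi>"
proof -
  obtain C where C0: "C \<ge> 0" and C: "\<And>\<alpha> v. norm (Tinv N Z lam \<alpha> *v v) \<le> C * norm v"
    using Tinv_uniform_bound by blast
  show ?thesis
    using diag_op_Xrep(2)[where M="Tinv N Z lam", OF C0 C] by (auto simp: inH_def)
qed

lemma Tinv_op_right_inverse:
  assumes L: "is_DPhi0 (Phi N lam Z) L" and \<phi>: "inH \<phi>"
  shows "inH (diag_op (Tinv N Z lam) \<phi>)" and "eqX (L (diag_op (Tinv N Z lam) \<phi>)) \<phi>"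
proof -
  have \<phi>X: "inX \<phi>" using \<phi> by (simp add: inH_def)
  note MX = Xrep_inX[OF Tinv_op_Xrep[OF \<phi>X]] and cM = Xrep_coefX[OF Tinv_op_Xrep[OF \<phi>X]]
  have "coefX (diag_op (Tinv N Z lam) \<phi>) \<alpha> = 0" if "mdeg UNIV \<alpha> \<le> 1" for \<alpha>
    using that by (simp add: cM Tinv_def)
  then show "inH (diag_op (Tinv N Z lam) \<phi>)" unfolding inH_def using MX by simp
  have "coefX (L (diag_op (Tinv N Z lam) \<phi>)) = coefX \<phi>"
    by (simp add: coefX_DPhi0[OF L MX] cM Tinv_cancel_H(1)[OF \<phi>])
  moreover have "is_Xrep (coefX (L (diag_op (Tinv N Z lam) \<phi>))) (L (diag_op (Tinv N Z lam) \<phi>))"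
    by (rule Xrep_coefX_of_inX[OF bounded_linX_inX[OF DPhi0_bounded_linX[OF L] MX]])
  ultimately show "eqX (L (diag_op (Tinv N Z lam) \<phi>)) \<phi>"
    using Xrep_eqX[OF _ Xrep_coefX_of_inX[OF \<phi>X]] by simp
qed

lemma Tinv_op_left_inverse:
  assumes L: "is_DPhi0 (Phi N lam Z) L" and P: "inH P"
  shows "eqX (diag_op (Tinv N Z lam) (L P)) P"
proof -
  have PX: "inX P" using P by (simp add: inH_def)
  note LX = bounded_linX_inX[OF DPhi0_bounded_linX[OF L] PX]
  have "(\<lambda>\<alpha>. Tinv N Z lam \<alpha> *v coefX (L P) \<alpha>) = coefX P"
    by (simp add: coefX_DPhi0[OF L PX] Tinv_cancel_H(2)[OF P])
  then show ?thesis using Xrep_eqX[OF Tinv_op_Xrep[OF LX]] Xrep_coefX_of_inX[OF PX] by simp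
qed

lemma inverse_on_H_diag_op:
  "is_DPhi0 (Phi N lam Z) L \<Longrightarrow> inverse_on_H L (diag_op (Tinv N Z lam))"
  unfolding inverse_on_H_def
  by (intro conjI allI impI Tinv_op_right_inverse Tinv_op_left_inverse)

lemma inverse_on_H_coeffs:
  assumes L: "is_DPhi0 (Phi N lam Z) L" and M: "inverse_on_H L M" and \<phi>: "inH \<phi>"
    and \<alpha>: "2 \<le> mdeg UNIV \<alpha>"
  shows "coefX (M \<phi>) \<alpha> = matrix_inv (Tmat N Z (lampow lam \<alpha>)) *v coefX \<phi> \<alpha>"
proof -
  have MH: "inH (M \<phi>)" and LM: "eqX (L (M \<phi>)) \<phi>" using M \<phi> unfolding inverse_on_H_def by auto
  have "Tmat N Z (lampow lam \<alpha>) *v coefX (M \<phi>) \<alpha> = coefX \<phi> \<alpha>"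
    using coefX_DPhi0[OF L, of "M \<phi>"] eqX_coefX[OF LM] MH by (simp add: inH_def fun_eq_iff)
  then show ?thesis using matrix_inv_left[OF Tmat_invertible[OF \<alpha>]] by metis
qed

end

theorem mainTheorem7:
  fixes \<rho> :: real and N :: nat
    and Z :: "(nat \<times> 'd::finite \<Rightarrow> complex) \<Rightarrow> complex ^ 'd"
    and lam :: "'m::finite \<Rightarrow> complex"
  assumes "\<rho> > 0"
    and "inA \<rho> ({..N} \<times> UNIV) Z"
    and "Z (\<lambda>_. 0) = 0"
    and "stable_nonresonant N Z lam"
    and "det (Bmat Z 0) \<noteq> 0"
  shows "(\<exists>L. is_DPhi0 (Phi N lam Z) L) \<and>
    (\<forall>L. is_DPhi0 (Phi N lam Z) L \<longrightarrow>
       (\<forall>P. inH P \<longrightarrow> inH (L P)) \<and>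
       (\<exists>M. inverse_on_H L M \<and> (\<exists>C. \<forall>\<phi>. inH \<phi> \<longrightarrow> normX (M \<phi>) \<le> C * normX \<phi>)) \<and>
       (\<forall>M. inverse_on_H L M \<longrightarrow>
          (\<forall>\<phi> \<alpha>. inH \<phi> \<longrightarrow> mdeg UNIV \<alpha> \<ge> 2 \<longrightarrow>
             coefX (M \<phi>) \<alpha> = matrix_inv (Tmat N Z (lampow lam \<alpha>)) *v coefX \<phi> \<alpha>)))"
proof -
  obtain cZ where repZ: "is_Arep \<rho> ({..N} \<times> UNIV) Z cZ" using assms(2) unfolding inA_def by blast
  note hyps = assms(1) repZ assms(3-5)
  have "is_DPhi0 (Phi N lam Z) (Lphi N lam Z)"
    by (rule Lphi_DPhi0[OF assms(1) repZ assms(3) lam_le1[OF hyps]])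
  moreover have "inH (L P)" if "is_DPhi0 (Phi N lam Z) L" "inH P" for L P
    by (rule DPhi0_maps_H[OF hyps that])
  moreover have "\<exists>M. inverse_on_H L M \<and> (\<exists>C. \<forall>\<phi>. inH \<phi> \<longrightarrow> normX (M \<phi>) \<le> C * normX \<phi>)"
    if "is_DPhi0 (Phi N lam Z) L" for L
    using inverse_on_H_diag_op[OF hyps that] Tinv_op_bounded[OF hyps] by blast
  moreover have "coefX (M \<phi>) \<alpha> = matrix_inv (Tmat N Z (lampow lam \<alpha>)) *v coefX \<phi> \<alpha>"
    if "is_DPhi0 (Phi N lam Z) L" "inverse_on_H L M" "inH \<phi>" "2 \<le> mdeg UNIV \<alpha>" for L M \<phi> \<alpha>
    by (rule inverse_on_H_coeffs[OF hyps that])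
  ultimately show ?thesis by blast
qed

end
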